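(* Let $P$ be a compact and $\Sigma$-repeatable online minimization problem with at most $2^{n^{O(1)}}$ inputs of length $n$, and let $c$ be a constant independent of $n$. The following are equivalent: (1) for every $\varepsilon>0$ there exists a randomized $(c+\varepsilon)$-competitive $P$-algorithm without advice; (2) for every $\varepsilon>0$ there exists a deterministic $(c+\varepsilon)$-competitive $P$-algorithm with advice complexity $o(n)$.
   Context: Online minimization problems and advice: an input is $\sigma=(s,x_1,\dots,x_n)$ consisting of an initial state $s$ and $n$ requests; $n$ is the length. A deterministic online algorithm with advice computes answers $y_1,\dots,y_n$, $y_i$ computed from the content of an infinite advice tape (prepared by an oracle knowing the whole input), $s$ and $x_1,\dots,x_i$; each $y_i$ must lie in a nonempty set of valid answers. Advice complexity $b(n)$: the largest number of advice bits read over inputs of length at most $n$. Costs are non-negative reals; $\mathrm{OPT}$ is the optimal offline cost. A randomized algorithm (with advice complexity $b(n)$) is a probability distribution over deterministic algorithms (with advice complexity at most $b(n)$). $R$ is $c$-competitive if there is a constant $\alpha$ (independent of the input, including its initial state) with $\mathbb{E}[R(\sigma)]\leq c\,\mathrm{OPT}(\sigma)+\alpha$ for all $\sigma$. Repeated problem and $\Sigma$-repeatability: for $P$-inputs $\sigma_1,\dots,\sigma_r$ with the same initial state, $(\sigma_1;\dots;\sigma_r)$ is the concatenation of their requests with the first request of each $\sigma_i$ marked so the algorithm knows when a new round starts. $P^*_\Sigma$ has these as inputs ($r\geq1$); an algorithm outputs for each round a valid $P$-answer sequence $\gamma_i$ for $\sigma_i$ (remembering previous rounds) and pays $\sum_i\mathrm{cost}_P(\gamma_i,\sigma_i)$;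 $\mathrm{OPT}^*_\Sigma$ is its optimum. $P$ is $\Sigma$-repeatable if every fixed $P$-input has finitely many valid outputs and there are constants $k_1,k_2,k_3\geq0$ and a map $g$ from $P^*_\Sigma$-inputs to $P$-inputs such that for every $\sigma^*$ with $r$ rounds: $|g(\sigma^* )|\leq|\sigma^*|+k_1r$; for every deterministic $P$-algorithm $\mathrm{ALG}$ there is a deterministic $P^*_\Sigma$-algorithm $\mathrm{ALG}^*$ with $\mathrm{ALG}^*(\sigma^* )\leq\mathrm{ALG}(g(\sigma^* ))+k_2r$ for all $\sigma^*$; and $\mathrm{OPT}^*_\Sigma(\sigma^* )\geq\mathrm{OPT}(g(\sigma^* ))-k_3r$. Compactness: $P$ is compact if, whenever $c>1$ is a constant such that every randomized $P$-algorithm (without advice) has competitive ratio at least $c$, then for every $\varepsilon>0$ and every $\alpha\geq0$ there is an input distribution $p_{\alpha,\varepsilon}$ with finite support such that $\mathbb{E}_{p_{\alpha,\varepsilon}}[D(\sigma)]\geq(c-\varepsilon)\mathbb{E}_{p_{\alpha,\varepsilon}}[\mathrm{OPT}(\sigma)]+\alpha$ for every deterministic algorithm $D$ without advice. *)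

theory Defs
  imports "HOL-Probability.Probability" "HOL-Library.Landau_Symbols"
begin

text \<open>An online problem: a set of inputs (initial state, request sequence);
  the set of valid answers for the i-th request, given the initial state,
  the requests x_1..x_i and the previous answers y_1..y_(i-1); and the cost
  of an answer sequence on an input.\<close>

record ('s, 'x, 'y) online_problem =
  inputs :: "('s \<times> 'x list) set"
  valid  :: "'s \<Rightarrow> 'x list \<Rightarrow> 'y list \<Rightarrow> 'y set"
  cost   :: "'s \<Rightarrow> 'x list \<Rightarrow> 'y list \<Rightarrow> real"

definition valid_out :: "('s,'x,'y) online_problem \<Rightarrow> 's \<Rightarrow> 'x list \<Rightarrow> 'y list \<Rightarrow> bool" where
  "valid_out P s xs ys \<longleftrightarrow> length ys = length xs \<and>
     (\<forall>i<length xs. ys ! i \<in> valid P s (take (Suc i) xs) (take i ys))"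

definition wf_problem :: "('s,'x,'y) online_problem \<Rightarrow> bool" where
  "wf_problem P \<longleftrightarrow>
     (\<forall>(s,xs)\<in>inputs P. \<forall>i<length xs. \<forall>ys.
         valid_out P s (take i xs) ys \<longrightarrow> valid P s (take (Suc i) xs) ys \<noteq> {}) \<and>
     (\<forall>(s,xs)\<in>inputs P. \<forall>ys. valid_out P s xs ys \<longrightarrow> cost P s xs ys \<ge> 0)"

definition OPT :: "('s,'x,'y) online_problem \<Rightarrow> 's \<Rightarrow> 'x list \<Rightarrow> real" where
  "OPT P s xs = Inf {cost P s xs ys | ys. valid_out P s xs ys}"

text \<open>A deterministic algorithm without advice maps the initial state and the
  requests seen so far (x_1..x_i) to the answer y_i.\<close>
definition run :: "('s \<Rightarrow> 'x list \<Rightarrow> 'y) \<Rightarrow> 's \<Rightarrow> 'x list \<Rightarrow> 'y list" where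
  "run D s xs = map (\<lambda>i. D s (take (Suc i) xs)) [0..<length xs]"

definition det_alg :: "('s,'x,'y) online_problem \<Rightarrow> ('s \<Rightarrow> 'x list \<Rightarrow> 'y) \<Rightarrow> bool" where
  "det_alg P D \<longleftrightarrow> (\<forall>(s,xs)\<in>inputs P. valid_out P s xs (run D s xs))"

definition alg_cost :: "('s,'x,'y) online_problem \<Rightarrow> ('s \<Rightarrow> 'x list \<Rightarrow> 'y) \<Rightarrow> 's \<Rightarrow> 'x list \<Rightarrow> real" where
  "alg_cost P D s xs = cost P s xs (run D s xs)"

text \<open>A deterministic algorithm with advice additionally gets the infinite
  advice tape (nat => bool).  It reads at most m advice bits on an input when its
  answers on that input are determined by the first m bits of the tape.\<close>
definition reads_at_most ::
  "((nat \<Rightarrow> bool) \<Rightarrow> 's \<Rightarrow> 'x list \<Rightarrow> 'y) \<Rightarrow> (nat \<Rightarrow> bool) \<Rightarrow> 's \<Rightarrow> 'x list \<Rightarrow> nat \<Rightarrow> bool" where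
  "reads_at_most A t s xs m \<longleftrightarrow>
     (\<forall>t'. (\<forall>j<m. t' j = t j) \<longrightarrow> run (A t') s xs = run (A t) s xs)"

definition det_adv_alg :: "('s,'x,'y) online_problem \<Rightarrow> ((nat \<Rightarrow> bool) \<Rightarrow> 's \<Rightarrow> 'x list \<Rightarrow> 'y) \<Rightarrow> bool" where
  "det_adv_alg P A \<longleftrightarrow> (\<forall>t. det_alg P (A t))"

definition det_adv_competitive ::
  "('s,'x,'y) online_problem \<Rightarrow> ((nat \<Rightarrow> bool) \<Rightarrow> 's \<Rightarrow> 'x list \<Rightarrow> 'y) \<Rightarrow> (nat \<Rightarrow> nat) \<Rightarrow> real \<Rightarrow> bool" where
  "det_adv_competitive P A b c \<longleftrightarrow> det_adv_alg P A \<and>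
     (\<exists>\<alpha>::real. \<forall>(s,xs)\<in>inputs P. \<exists>t. reads_at_most A t s xs (b (length xs)) \<and>
         alg_cost P (A t) s xs \<le> c * OPT P s xs + \<alpha>)"

definition rand_alg :: "('s,'x,'y) online_problem \<Rightarrow> ('s \<Rightarrow> 'x list \<Rightarrow> 'y) measure \<Rightarrow> bool" where
  "rand_alg P R \<longleftrightarrow> prob_space R \<and> (\<forall>D\<in>space R. det_alg P D) \<and>
     (\<forall>(s,xs)\<in>inputs P. (\<lambda>D. alg_cost P D s xs) \<in> borel_measurable R)"

definition exp_cost :: "('s,'x,'y) online_problem \<Rightarrow> ('s \<Rightarrow> 'x list \<Rightarrow> 'y) measure \<Rightarrow> 's \<Rightarrow> 'x list \<Rightarrow> ennreal" where
  "exp_cost P R s xs = (\<integral>\<^sup>+ D. ennreal (alg_cost P D s xs) \<partial>R)"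

definition rand_competitive :: "('s,'x,'y) online_problem \<Rightarrow> ('s \<Rightarrow> 'x list \<Rightarrow> 'y) measure \<Rightarrow> real \<Rightarrow> bool" where
  "rand_competitive P R c \<longleftrightarrow>
     (\<exists>\<alpha>::real. \<forall>(s,xs)\<in>inputs P. enn2ereal (exp_cost P R s xs) \<le> ereal (c * OPT P s xs + \<alpha>))"

definition compact_problem :: "('s,'x,'y) online_problem \<Rightarrow> bool" where
  "compact_problem P \<longleftrightarrow>
     (\<forall>c::real. c > 1 \<longrightarrow>
        (\<forall>R c'. rand_alg P R \<and> c' < c \<longrightarrow> \<not> rand_competitive P R c') \<longrightarrow>
        (\<forall>\<epsilon>>0. \<forall>\<alpha>\<ge>0. \<exists>p :: ('s \<times> 'x list) pmf.
            finite (set_pmf p) \<and> set_pmf p \<subseteq> inputs P \<and>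
            (\<forall>D. det_alg P D \<longrightarrow>
               measure_pmf.expectation p (\<lambda>(s,xs). alg_cost P D s xs)
                 \<ge> (c - \<epsilon>) * measure_pmf.expectation p (\<lambda>(s,xs). OPT P s xs) + \<alpha>)))"

text \<open>Inputs of the repeated problem: an initial state s and r >= 1 rounds, each
  round a (nonempty, so that its first request can be marked) request sequence
  forming a P-input with initial state s.\<close>
definition rep_inputs :: "('s,'x,'y) online_problem \<Rightarrow> ('s \<times> 'x list list) set" where
  "rep_inputs P = {(s, xss). xss \<noteq> [] \<and> (\<forall>xs\<in>set xss. xs \<noteq> [] \<and> (s, xs) \<in> inputs P)}"

definition rep_length :: "'x list list \<Rightarrow> nat" where
  "rep_length xss = sum_list (map length xss)"

text \<open>A deterministic algorithm for the repeated problem maps the initial state,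
  the requests of all previous rounds, and the requests of the current round so
  far, to an answer.\<close>
definition rep_run :: "('s \<Rightarrow> 'x list list \<Rightarrow> 'x list \<Rightarrow> 'y) \<Rightarrow> 's \<Rightarrow> 'x list list \<Rightarrow> nat \<Rightarrow> 'y list" where
  "rep_run A s xss i = run (\<lambda>s' pre. A s (take i xss) pre) s (xss ! i)"

definition det_rep_alg :: "('s,'x,'y) online_problem \<Rightarrow> ('s \<Rightarrow> 'x list list \<Rightarrow> 'x list \<Rightarrow> 'y) \<Rightarrow> bool" where
  "det_rep_alg P A \<longleftrightarrow> (\<forall>(s,xss)\<in>rep_inputs P. \<forall>i<length xss. valid_out P s (xss ! i) (rep_run A s xss i))"

definition rep_cost :: "('s,'x,'y) online_problem \<Rightarrow> ('s \<Rightarrow> 'x list list \<Rightarrow> 'x list \<Rightarrow> 'y) \<Rightarrow> 's \<Rightarrow> 'x list list \<Rightarrow> real" where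
  "rep_cost P A s xss = (\<Sum>i<length xss. cost P s (xss ! i) (rep_run A s xss i))"

definition rep_OPT :: "('s,'x,'y) online_problem \<Rightarrow> 's \<Rightarrow> 'x list list \<Rightarrow> real" where
  "rep_OPT P s xss = Inf {(\<Sum>i<length xss. cost P s (xss ! i) (yss ! i)) | yss.
       length yss = length xss \<and> (\<forall>i<length xss. valid_out P s (xss ! i) (yss ! i))}"

definition sigma_repeatable :: "('s,'x,'y) online_problem \<Rightarrow> bool" where
  "sigma_repeatable P \<longleftrightarrow>
     (\<forall>(s,xs)\<in>inputs P. finite {ys. valid_out P s xs ys}) \<and>
     (\<exists>k1 k2 k3 :: real. k1 \<ge> 0 \<and> k2 \<ge> 0 \<and> k3 \<ge> 0 \<and>
      (\<exists>g :: 's \<times> 'x list list \<Rightarrow> 's \<times> 'x list.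
        (\<forall>(s,xss)\<in>rep_inputs P.
            g (s,xss) \<in> inputs P \<and>
            real (length (snd (g (s,xss)))) \<le> real (rep_length xss) + k1 * real (length xss) \<and>
            rep_OPT P s xss \<ge> OPT P (fst (g (s,xss))) (snd (g (s,xss))) - k3 * real (length xss)) \<and>
        (\<forall>D. det_alg P D \<longrightarrow> (\<exists>A. det_rep_alg P A \<and>
            (\<forall>(s,xss)\<in>rep_inputs P.
               rep_cost P A s xss \<le> alg_cost P D (fst (g (s,xss))) (snd (g (s,xss))) + k2 * real (length xss))))))"

text \<open>At most 2^(n^O(1)) inputs of length n (the bound is written with (n+1) so
  that it is meaningful also for n = 0).\<close>
definition few_inputs :: "('s,'x,'y) online_problem \<Rightarrow> bool" where
  "few_inputs P \<longleftrightarrow> (\<exists>C k :: nat. \<forall>n.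
     finite {\<sigma>\<in>inputs P. length (snd \<sigma>) = n} \<and>
     card {\<sigma>\<in>inputs P. length (snd \<sigma>) = n} \<le> 2 ^ (C * (n + 1) ^ k))"

end

theory Submission
  imports Defs "HOL-Real_Asymp.Real_Asymp"
begin

text \<open>
  (1) \<Longrightarrow> (2): let R be a randomized (c + \<epsilon>/2)-competitive algorithm and \<delta> > 0. By Markov's
  inequality, on every input a deterministic algorithm drawn from R costs at most (1 + \<delta>) times
  its expected bound with probability at least \<delta>/(1 + \<delta>). Since there are only 2^(n^O(1)) inputs
  of length n, a greedy hitting-set argument yields for every n a list of n^O(1) deterministic
  algorithms containing a good one for each input of length n; the advice names n and the index
  of that algorithm in O(log n) bits.

  (2) \<Longrightarrow> (1): if no randomized algorithm is (c + \<epsilon>)-competitive, compactness gives finitely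
  supported input distributions on which every deterministic algorithm pays (c + \<epsilon>/2) OPT + \<alpha>
  in expectation, for arbitrarily large \<alpha>, and such a distribution can be concentrated on one
  initial state (the case c < 1 reduces to c = 1, since then OPT is bounded). Feed r independent
  draws as the rounds of one input of the repeated problem. By \<Sigma>-repeatability every advice tape
  of a (c + \<epsilon>/2)-competitive algorithm with o(n) advice turns into an algorithm for the repeated
  problem whose per-round cost exceeds c OPT by \<alpha> in expectation; an exponential moment bound
  shows that it does much better on all r rounds only with probability e^(-\<Omega>(r)). For some tape,
  however, it always does, and there are only 2^(o(r)) relevant tapes: a union bound gives a
  contradiction.
\<close>

lemma run_cong:
  "(\<And>i. i < length xs \<Longrightarrow> D s (take (Suc i) xs) = D' s (take (Suc i) xs)) \<Longrightarrow> run D s xs = run D' s xs"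
  by (simp add: run_def)

lemma run_statewise [simp]: "run (\<lambda>s. D s s) s xs = run (D s) s xs"
  by (rule run_cong) simp

lemma alg_cost_statewise [simp]: "alg_cost P (\<lambda>s. D s s) s xs = alg_cost P (D s) s xs"
  by (simp add: alg_cost_def)

lemma det_alg_valid_out: "det_alg P D \<Longrightarrow> (s, xs) \<in> inputs P \<Longrightarrow> valid_out P s xs (run D s xs)"
  unfolding det_alg_def by blast

lemma det_alg_statewise:
  assumes "\<And>s. det_alg P (D s)"
  shows "det_alg P (\<lambda>s. D s s)"
  using det_alg_valid_out[OF assms] unfolding det_alg_def by auto

lemma cost_nonneg:
  "wf_problem P \<Longrightarrow> (s, xs) \<in> inputs P \<Longrightarrow> valid_out P s xs ys \<Longrightarrow> 0 \<le> cost P s xs ys"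
  unfolding wf_problem_def by blast

lemma OPT_le_cost:
  assumes "wf_problem P" "(s, xs) \<in> inputs P" "valid_out P s xs ys"
  shows "OPT P s xs \<le> cost P s xs ys"
  unfolding OPT_def
  by (rule cInf_lower) (use assms cost_nonneg in \<open>auto intro!: bdd_belowI[of _ 0]\<close>)

lemma OPT_le_alg_cost:
  "wf_problem P \<Longrightarrow> (s, xs) \<in> inputs P \<Longrightarrow> det_alg P D \<Longrightarrow> OPT P s xs \<le> alg_cost P D s xs"
  unfolding alg_cost_def by (rule OPT_le_cost) (auto dest: det_alg_valid_out)

lemma OPT_nonneg:
  assumes "wf_problem P" "(s, xs) \<in> inputs P" "det_alg P D"
  shows "0 \<le> OPT P s xs"
  unfolding OPT_def
proof (rule cInf_greatest)
  show "{cost P s xs ys |ys. valid_out P s xs ys} \<noteq> {}"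
    using det_alg_valid_out[OF assms(3,2)] by blast
qed (use cost_nonneg[OF assms(1,2)] in blast)

lemma OPT_attained:
  assumes "finite {ys. valid_out P s xs ys}" "valid_out P s xs ys0"
  obtains ys where "valid_out P s xs ys" "cost P s xs ys = OPT P s xs"
proof -
  let ?C = "cost P s xs ` {ys. valid_out P s xs ys}"
  have "finite ?C" "?C \<noteq> {}"
    using assms by auto
  moreover have "{cost P s xs ys |ys. valid_out P s xs ys} = ?C"
    by blast
  ultimately have "OPT P s xs \<in> ?C"
    unfolding OPT_def by (simp add: cInf_eq_Min)
  then show ?thesis using that by (metis imageE mem_Collect_eq)
qed

lemma alg_cost_Nil_le:
  assumes "wf_problem P" "(s, []) \<in> inputs P" "1 \<le> c"
  shows "alg_cost P D s [] \<le> c * OPT P s []"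
proof -
  have valid: "valid_out P s [] ys \<longleftrightarrow> ys = []" for ys
    by (simp add: valid_out_def)
  then have "OPT P s [] = cost P s [] []"
    by (simp add: OPT_def)
  moreover have "0 \<le> cost P s [] []"
    using cost_nonneg[OF assms(1,2)] valid by blast
  ultimately show ?thesis
    using \<open>1 \<le> c\<close> by (simp add: alg_cost_def run_def mult_le_cancel_right1)
qed

lemma rand_competitive_weaken:
  assumes "rand_competitive P R c1"
    and "\<And>s xs. (s, xs) \<in> inputs P \<Longrightarrow> c1 * OPT P s xs \<le> c2 * OPT P s xs + K"
  shows "rand_competitive P R c2"
proof -
  obtain a where a: "\<forall>(s, xs)\<in>inputs P. enn2ereal (exp_cost P R s xs) \<le> ereal (c1 * OPT P s xs + a)"
    using assms(1) unfolding rand_competitive_def by blast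
  have "enn2ereal (exp_cost P R s xs) \<le> ereal (c2 * OPT P s xs + (K + a))"
    if "(s, xs) \<in> inputs P" for s xs
  proof -
    have "enn2ereal (exp_cost P R s xs) \<le> ereal (c1 * OPT P s xs + a)"
      using a that by blast
    also have "\<dots> \<le> ereal (c2 * OPT P s xs + (K + a))"
      using assms(2)[OF that] by simp
    finally show ?thesis .
  qed
  then show ?thesis
    unfolding rand_competitive_def by blast
qed

lemma det_adv_competitive_weaken:
  assumes "det_adv_competitive P A b c1"
    and "\<And>s xs. (s, xs) \<in> inputs P \<Longrightarrow> c1 * OPT P s xs \<le> c2 * OPT P s xs + K"
  shows "det_adv_competitive P A b c2"
proof -
  obtain a where a: "\<forall>(s, xs)\<in>inputs P. \<exists>t. reads_at_most A t s xs (b (length xs)) \<and>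
      alg_cost P (A t) s xs \<le> c1 * OPT P s xs + a"
    using assms(1) unfolding det_adv_competitive_def by blast
  have "\<exists>t. reads_at_most A t s xs (b (length xs)) \<and> alg_cost P (A t) s xs \<le> c2 * OPT P s xs + (K + a)"
    if "(s, xs) \<in> inputs P" for s xs
    using a assms(2)[OF that] that by fastforce
  then show ?thesis
    using assms(1) unfolding det_adv_competitive_def by blast
qed

lemma OPT_nonneg_if_det_adv_competitive:
  "wf_problem P \<Longrightarrow> det_adv_competitive P A b c \<Longrightarrow> (s, xs) \<in> inputs P \<Longrightarrow> 0 \<le> OPT P s xs"
  unfolding det_adv_competitive_def det_adv_alg_def by (blast intro: OPT_nonneg)

lemma OPT_bounded_if_det_adv_competitive_lt_1:
  assumes wf: "wf_problem P" and A: "det_adv_competitive P A b c" and "c < 1"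
  obtains B where "\<And>s xs. (s, xs) \<in> inputs P \<Longrightarrow> OPT P s xs \<le> B"
proof -
  obtain a where a: "\<forall>(s, xs)\<in>inputs P. \<exists>t. alg_cost P (A t) s xs \<le> c * OPT P s xs + a"
    and det: "\<And>t. det_alg P (A t)"
    using A unfolding det_adv_competitive_def det_adv_alg_def by blast
  have "OPT P s xs \<le> a / (1 - c)" if inp: "(s, xs) \<in> inputs P" for s xs
  proof -
    obtain t where "alg_cost P (A t) s xs \<le> c * OPT P s xs + a"
      using a inp by blast
    with OPT_le_alg_cost[OF wf inp det[of t]] have "(1 - c) * OPT P s xs \<le> a"
      by (simp add: algebra_simps)
    with \<open>c < 1\<close> show ?thesis
      by (simp add: field_simps)
  qed
  then show ?thesis using that by blast
qed

section \<open>Advice naming one of polynomially many algorithms\<close>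

text \<open>A self-delimiting code: l ones, a zero, and then the l low-order bits of v.\<close>

definition selfdelim_encode :: "nat \<Rightarrow> nat \<Rightarrow> nat \<Rightarrow> bool" where
  "selfdelim_encode l v j \<longleftrightarrow> j < l \<or> (l < j \<and> j \<le> 2 * l \<and> bit v (j - l - 1))"

definition selfdelim_decode :: "(nat \<Rightarrow> bool) \<Rightarrow> nat" where
  "selfdelim_decode t =
     (let l = LEAST j. \<not> t j in horner_sum of_bool 2 (map (\<lambda>i. t (l + 1 + i)) [0..<l]))"

lemma selfdelim_decode_eq:
  assumes "v < 2 ^ l" and t: "\<And>j. j \<le> 2 * l \<Longrightarrow> t j = selfdelim_encode l v j"
  shows "selfdelim_decode t = v"
proof -
  have l: "(LEAST j. \<not> t j) = l"
    by (rule Least_equality) (use t in \<open>auto simp: selfdelim_encode_def not_less[symmetric]\<close>)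
  have bits: "map (\<lambda>i. t (l + 1 + i)) [0..<l] = map (bit v) [0..<l]"
    using t by (auto simp: selfdelim_encode_def)
  have "selfdelim_decode t = take_bit l v"
    unfolding selfdelim_decode_def Let_def l bits by (rule horner_sum_bit_eq_take_bit)
  with \<open>v < 2 ^ l\<close> show ?thesis
    by (simp add: take_bit_nat_eq_self)
qed

lemma prod_encode_mono2: "i \<le> j \<Longrightarrow> prod_encode (n, i) \<le> prod_encode (n, j)"
proof -
  assume "i \<le> j"
  then have "triangle (n + i) \<le> triangle (n + j)"
    unfolding triangle_def by (intro div_le_mono mult_le_mono) auto
  then show ?thesis
    by (simp add: prod_encode_def)
qed

lemma prod_encode_less_square: "prod_encode (m, n) < (m + n + 1) ^ 2"
  by (simp add: prod_encode_def triangle_def power2_eq_square algebra_simps)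

lemma prod_encode_le_poly:
  assumes "i \<le> Q * (n + 1) ^ d"
  shows "real (prod_encode (n, i)) \<le> (real Q + 1) ^ 2 * (real n + 1) ^ (2 * d + 2)"
proof -
  have "n + 1 \<le> (n + 1) ^ (d + 1)" "Q * (n + 1) ^ d \<le> Q * (n + 1) ^ (d + 1)"
    using power_increasing[of 1 "d + 1" "n + 1"] power_increasing[of d "d + 1" "n + 1"] by simp_all
  then have bound: "n + i + 1 \<le> (n + 1) ^ (d + 1) + Q * (n + 1) ^ (d + 1)"
    using assms by linarith
  have "prod_encode (n, i) < (n + i + 1) ^ 2"
    by (rule prod_encode_less_square)
  also have "\<dots> \<le> ((Q + 1) * (n + 1) ^ (d + 1)) ^ 2"
    by (rule power_mono) (use bound in \<open>simp_all add: algebra_simps\<close>)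
  also have "\<dots> = (Q + 1) ^ 2 * (n + 1) ^ (2 * d + 2)"
    using power_mult[of "n + 1" "d + 1" 2] by (simp only: power_mult_distrib) (simp add: mult.commute[of d 2])
  finally have "real (prod_encode (n, i)) \<le> real ((Q + 1) ^ 2 * (n + 1) ^ (2 * d + 2))"
    by (simp only: of_nat_le_iff less_imp_le)
  then show ?thesis
    by (simp only: of_nat_mult of_nat_power of_nat_add of_nat_1)
qed

lemma Least_less_pow2_le_log: "real (LEAST l. v < 2 ^ l) \<le> log 2 (real v + 1) + 1"
proof -
  define l where "l = nat \<lceil>log 2 (real v + 1)\<rceil>"
  have "real v + 1 = 2 powr log 2 (real v + 1)"
    by simp
  also have "\<dots> \<le> 2 powr real l"
    unfolding l_def by (intro powr_mono) auto
  finally have "real (v + 1) \<le> real (2 ^ l)"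
    by (simp add: powr_realpow)
  then have "v < 2 ^ l"
    by (simp only: of_nat_le_iff Suc_eq_plus1[symmetric] Suc_le_eq)
  then have "real (LEAST l. v < 2 ^ l) \<le> real l"
    by (simp add: Least_le)
  moreover have "real l \<le> log 2 (real v + 1) + 1"
    using zero_le_log_cancel_iff[of 2 "real v + 1"] unfolding l_def by linarith
  ultimately show ?thesis
    by linarith
qed

lemma bit_length_small_o:
  fixes v :: "nat \<Rightarrow> nat"
  assumes v: "\<And>n. real (v n) \<le> K * (real n + 1) ^ d"
  shows "(\<lambda>n. real (LEAST l. v n < 2 ^ l)) \<in> o(\<lambda>n. real n)"
proof -
  have K: "0 \<le> K"
    using v[of 0] by simp
  have bound: "real (LEAST l. v n < 2 ^ l) \<le> log 2 (K + 1) + 1 + real d / ln 2 * ln (real n + 1)" for n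
  proof -
    have "1 \<le> (real n + 1) ^ d"
      by simp
    then have "real (v n) + 1 \<le> (K + 1) * (real n + 1) ^ d"
      using add_mono[OF v[of n]] by (simp add: distrib_right)
    then have "log 2 (real (v n) + 1) \<le> log 2 ((K + 1) * (real n + 1) ^ d)"
      using K by simp
    also have "\<dots> = log 2 (K + 1) + real d / ln 2 * ln (real n + 1)"
      using K by (simp add: log_def ln_mult ln_realpow add_divide_distrib)
    finally show ?thesis
      using Least_less_pow2_le_log[of "v n"] by linarith
  qed
  have "(\<lambda>n. real (LEAST l. v n < 2 ^ l)) \<in> O(\<lambda>n. log 2 (K + 1) + 1 + real d / ln 2 * ln (real n + 1))"
    using bound by (intro bigoI[of _ 1] always_eventually) (auto intro: order_trans[OF _ abs_ge_self])
  also have "(\<lambda>n::nat. log 2 (K + 1) + 1 + real d / ln 2 * ln (real n + 1)) \<in> o(\<lambda>n. real n)"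
    by real_asymp
  finally show ?thesis .
qed

lemma advice_selecting_from_lists:
  fixes Ls :: "nat \<Rightarrow> ('s \<Rightarrow> 'x list \<Rightarrow> 'y) list"
  assumes Ls: "\<And>n D. D \<in> set (Ls n) \<Longrightarrow> det_alg P D" and D0: "det_alg P D0"
    and len: "\<And>n. length (Ls n) \<le> Q * (n + 1) ^ d"
  obtains A b where "det_adv_alg P A" "(\<lambda>n. real (b n)) \<in> o(\<lambda>n. real n)"
    "\<And>n D. D \<in> set (Ls n) \<Longrightarrow> \<exists>t. \<forall>t'. (\<forall>j<b n. t' j = t j) \<longrightarrow> A t' = D"
proof
  \<comment> \<open>The advice for an input of length n is the code of the pair (n, i) naming the i-th algorithm.\<close>
  define A where "A t = (case prod_decode (selfdelim_decode t) of
      (n, i) \<Rightarrow> if i < length (Ls n) then Ls n ! i else D0)" for t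
  define l where "l n = (LEAST l. prod_encode (n, length (Ls n)) < 2 ^ l)" for n
  define b where "b n = 2 * l n + 1" for n
  show "det_adv_alg P A"
    unfolding det_adv_alg_def A_def using Ls[OF nth_mem] D0 by (auto split: prod.split)
  have "real (prod_encode (n, length (Ls n))) \<le> (real Q + 1) ^ 2 * (real n + 1) ^ (2 * d + 2)" for n
    using len by (rule prod_encode_le_poly)
  then have "(\<lambda>n. real (l n)) \<in> o(\<lambda>n. real n)"
    unfolding l_def by (rule bit_length_small_o)
  then have "(\<lambda>n. 2 * real (l n)) \<in> o(\<lambda>n. real n)"
    by (simp add: landau_o.small.cmult_in_iff)
  moreover have "(\<lambda>_::nat. 1) \<in> o(\<lambda>n. real n)"
    by real_asymp
  ultimately have "(\<lambda>n. 2 * real (l n) + 1) \<in> o(\<lambda>n. real n)"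
    by (rule sum_in_smallo(1))
  then show "(\<lambda>n. real (b n)) \<in> o(\<lambda>n. real n)"
    by (simp add: b_def add.commute)
  fix n D assume "D \<in> set (Ls n)"
  then obtain i where i: "i < length (Ls n)" "D = Ls n ! i"
    by (auto simp: in_set_conv_nth)
  have "prod_encode (n, i) < 2 ^ l n"
    using prod_encode_mono2[of i "length (Ls n)" n] LeastI[of "\<lambda>l. prod_encode (n, length (Ls n)) < 2 ^ l"]
      i(1) unfolding l_def by (meson le_less_trans less_exp less_imp_le)
  then have "A t' = D" if "\<forall>j<b n. t' j = selfdelim_encode (l n) (prod_encode (n, i)) j" for t'
    using that selfdelim_decode_eq[of "prod_encode (n, i)" "l n" t'] i by (simp add: A_def b_def)
  then show "\<exists>t. \<forall>t'. (\<forall>j<b n. t' j = t j) \<longrightarrow> A t' = D"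
    by blast
qed

section \<open>From randomized algorithms to advice\<close>

lemma (in prob_space) prob_le_Markov:
  assumes u: "u \<in> borel_measurable M" "\<And>x. x \<in> space M \<Longrightarrow> 0 \<le> u x"
    and E: "(\<integral>\<^sup>+x. ennreal (u x) \<partial>M) \<le> ennreal \<beta>" and "0 < \<beta>" "0 < \<delta>"
  shows "\<delta> / (1 + \<delta>) \<le> prob {x \<in> space M. u x \<le> (1 + \<delta>) * \<beta>}"
proof -
  define c where "c = (1 + \<delta>) * \<beta>"
  have c: "0 < c" using assms by (simp add: c_def)
  have AE: "AE x in M. 0 \<le> u x" using u(2) by (simp add: AE_I2)
  have int: "integrable M u"
    by (rule integrableI_nonneg[OF u(1) AE]) (use E in \<open>simp add: le_less_trans\<close>)
  have "integral\<^sup>L M u = enn2real (\<integral>\<^sup>+x. ennreal (u x) \<partial>M)"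
    by (rule integral_eq_nn_integral[OF u(1) AE])
  also have "\<dots> \<le> \<beta>"
    using E \<open>0 < \<beta>\<close> by (simp add: enn2real_leI)
  finally have "integral\<^sup>L M u \<le> \<beta>" .
  have "prob {x \<in> space M. c \<le> u x} \<le> integral\<^sup>L M u / c"
    by (rule integral_Markov_inequality_measure[OF int sets.top AE c])
  also have "\<dots> \<le> \<beta> / c"
    using \<open>integral\<^sup>L M u \<le> \<beta>\<close> c by (simp add: divide_right_mono)
  also have "\<beta> / c = 1 / (1 + \<delta>)"
    using assms by (simp add: c_def)
  finally have "1 - 1 / (1 + \<delta>) \<le> 1 - prob {x \<in> space M. c \<le> u x}"
    by simp
  also have "\<dots> = prob (space M - {x \<in> space M. c \<le> u x})"
    by (rule prob_compl[symmetric]) (use u(1) in measurable)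
  also have "\<dots> \<le> prob {x \<in> space M. u x \<le> c}"
    by (rule finite_measure_mono) (use u(1) in \<open>auto, measurable\<close>)
  finally show ?thesis
    using \<open>0 < \<delta>\<close> by (simp add: c_def field_simps)
qed

lemma (in prob_space) exists_point_in_many_events:
  assumes finF: "finite F" and F: "F \<subseteq> events" and p: "\<And>G. G \<in> F \<Longrightarrow> p \<le> prob G"
  shows "\<exists>x\<in>space M. p * real (card F) \<le> real (card {G \<in> F. x \<in> G})"
proof (rule ccontr)
  assume neg: "\<not> ?thesis"
  define f where "f x = real (card {G \<in> F. x \<in> G})" for x
  have f_eq: "f = (\<lambda>x. \<Sum>G\<in>F. indicator G x)"
    by (simp add: f_def fun_eq_iff indicator_def of_bool_def sum.inter_filter[OF finF, symmetric])
  have int_ind: "integrable M (indicator G :: 'a \<Rightarrow> real)" if "G \<in> F" for G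
    using F that by (intro integrable_real_indicator) (auto simp: less_top[symmetric])
  have "p * real (card F) \<le> (\<Sum>G\<in>F. prob G)"
    using sum_mono[of F "\<lambda>_. p" prob, OF p] by (simp add: mult.commute)
  also have "\<dots> = (\<Sum>G\<in>F. integral\<^sup>L M (indicator G))"
    using F sets.sets_into_space by (intro sum.cong) (auto simp: Int_absorb2)
  also have "\<dots> = integral\<^sup>L M f"
    unfolding f_eq by (rule Bochner_Integration.integral_sum[symmetric]) (rule int_ind)
  finally have low: "p * real (card F) \<le> integral\<^sup>L M f" .
  have "f ` space M \<subseteq> real ` {0..card F}"
    using card_mono[OF finF] by (auto simp: f_def)
  then have fin: "finite (f ` space M)"
    by (rule finite_subset) simp
  define m where "m = Max (f ` space M)"
  have "m \<in> f ` space M"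
    unfolding m_def using fin not_empty by (intro Max_in) auto
  then have "m < p * real (card F)"
    using neg by (auto simp: f_def)
  moreover have "integral\<^sup>L M f \<le> m"
    using integral_mono[of M f "\<lambda>_. m"] Max_ge[OF fin] unfolding f_eq m_def
    by (simp add: f_eq int_ind prob_space)
  ultimately show False using low by simp
qed

lemma (in prob_space) greedy_hitting_list:
  assumes "finite F" "F \<subseteq> events" "\<And>G. G \<in> F \<Longrightarrow> p \<le> prob G" "0 < p" "p < 1"
    and "real (card F) < (1 / (1 - p)) ^ j"
  shows "\<exists>L. set L \<subseteq> space M \<and> length L \<le> j \<and> (\<forall>G\<in>F. \<exists>x\<in>set L. x \<in> G)"
  using assms(1-3,6)
proof (induction j arbitrary: F)
  case 0
  then show ?case by (intro exI[of _ "[]"]) simp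
next
  case (Suc j)
  obtain x where x: "x \<in> space M" "p * real (card F) \<le> real (card {G \<in> F. x \<in> G})"
    using exists_point_in_many_events[OF Suc.prems(1-3)] by blast
  define F' where "F' = {G \<in> F. x \<notin> G}"
  have "card F = card F' + card {G \<in> F. x \<in> G}"
    unfolding F'_def using Suc.prems(1) by (subst card_Un_disjoint[symmetric]) (auto intro: arg_cong[of _ _ card])
  then have "real (card F') \<le> (1 - p) * real (card F)"
    using x(2) by (simp add: algebra_simps)
  also have "\<dots> < (1 - p) * (1 / (1 - p)) ^ Suc j"
    by (rule mult_strict_left_mono) (use Suc.prems(4) \<open>p < 1\<close> in auto)
  also have "\<dots> = (1 / (1 - p)) ^ j"
    using \<open>p < 1\<close> by simp
  finally obtain L where L: "set L \<subseteq> space M" "length L \<le> j" "\<forall>G\<in>F'. \<exists>x\<in>set L. x \<in> G"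
    using Suc.IH[of F'] Suc.prems(1-3) by (auto simp: F'_def)
  show ?case
    by (rule exI[of _ "x # L"]) (use L x(1) in \<open>auto simp: F'_def\<close>)
qed

lemma (in prob_space) poly_size_hitting_lists:
  fixes P :: "('s, 'x, 'y) online_problem"
  assumes few: "few_inputs P" and p: "0 < p" "p < 1"
    and G: "\<And>\<sigma>. \<sigma> \<in> inputs P \<Longrightarrow> G \<sigma> \<in> events" "\<And>\<sigma>. \<sigma> \<in> inputs P \<Longrightarrow> p \<le> prob (G \<sigma>)"
  obtains Q d and Ls :: "nat \<Rightarrow> 'a list" where
    "\<And>n. set (Ls n) \<subseteq> space M" "\<And>n. length (Ls n) \<le> Q * (n + 1) ^ d"
    "\<And>\<sigma>. \<sigma> \<in> inputs P \<Longrightarrow> \<exists>x\<in>set (Ls (length (snd \<sigma>))). x \<in> G \<sigma>"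
proof -
  define In where "In n = {\<sigma> \<in> inputs P. length (snd \<sigma>) = n}" for n
  obtain C k :: nat where Ck: "\<And>n. finite (In n) \<and> card (In n) \<le> 2 ^ (C * (n + 1) ^ k)"
    using few unfolding few_inputs_def In_def by blast
  obtain m where m: "2 < (1 / (1 - p)) ^ m"
    using real_arch_pow[of "1 / (1 - p)" 2] p by auto
  define j where "j n = m * (C * (n + 1) ^ k + 1)" for n
  have "\<exists>L. set L \<subseteq> space M \<and> length L \<le> j n \<and> (\<forall>H\<in>G ` In n. \<exists>x\<in>set L. x \<in> H)" for n
  proof (rule greedy_hitting_list[OF _ _ _ p])
    show "finite (G ` In n)" "G ` In n \<subseteq> events" "\<And>H. H \<in> G ` In n \<Longrightarrow> p \<le> prob H"
      using Ck[of n] G by (auto simp: In_def)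
    have "card (G ` In n) \<le> 2 ^ (C * (n + 1) ^ k)"
      using card_image_le[of "In n" G] Ck[of n] by linarith
    then have "real (card (G ` In n)) \<le> 2 ^ (C * (n + 1) ^ k)"
      by (metis of_nat_le_iff of_nat_numeral of_nat_power)
    also have "\<dots> < 2 ^ (C * (n + 1) ^ k + 1)"
      by simp
    also have "\<dots> \<le> ((1 / (1 - p)) ^ m) ^ (C * (n + 1) ^ k + 1)"
      using m by (intro power_mono) auto
    also have "\<dots> = (1 / (1 - p)) ^ j n"
      by (simp only: j_def power_mult)
    finally show "real (card (G ` In n)) < (1 / (1 - p)) ^ j n" .
  qed
  then obtain Ls where Ls: "\<And>n. set (Ls n) \<subseteq> space M \<and> length (Ls n) \<le> j n \<and>
      (\<forall>H\<in>G ` In n. \<exists>x\<in>set (Ls n). x \<in> H)"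
    by metis
  have "j n \<le> (m * (C + 1)) * (n + 1) ^ k" for n
    using one_le_power[of "n + 1" k] by (simp add: j_def algebra_simps)
  moreover have "\<exists>x\<in>set (Ls (length (snd \<sigma>))). x \<in> G \<sigma>" if "\<sigma> \<in> inputs P" for \<sigma>
  proof -
    have "G \<sigma> \<in> G ` In (length (snd \<sigma>))"
      using that by (simp add: In_def)
    then show ?thesis
      using Ls by blast
  qed
  ultimately show ?thesis
    using that[of Ls "m * (C + 1)" k] Ls le_trans by blast
qed

lemma prob_alg_cost_le_Markov:
  assumes wf: "wf_problem P" and R: "rand_alg P R" and inp: "(s, xs) \<in> inputs P"
    and E: "enn2ereal (exp_cost P R s xs) \<le> ereal \<beta>" and "0 < \<delta>"
  shows "{D \<in> space R. alg_cost P D s xs \<le> (1 + \<delta>) * (\<beta> + 1)} \<in> sets R \<and>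
    \<delta> / (1 + \<delta>) \<le> measure R {D \<in> space R. alg_cost P D s xs \<le> (1 + \<delta>) * (\<beta> + 1)}"
proof -
  interpret R: prob_space R
    using R by (simp add: rand_alg_def)
  have u: "(\<lambda>D. alg_cost P D s xs) \<in> borel_measurable R"
    using R inp unfolding rand_alg_def by blast
  have "0 \<le> \<beta>"
    using order_trans[OF enn2ereal_nonneg E] by simp
  have "enn2ereal (exp_cost P R s xs) \<le> ereal (\<beta> + 1)"
    using E by (rule order_trans) simp
  moreover have "enn2ereal (ennreal (\<beta> + 1)) = ereal (\<beta> + 1)"
    using \<open>0 \<le> \<beta>\<close> by (simp add: enn2ereal_ennreal del: ennreal_plus)
  ultimately have "(\<integral>\<^sup>+D. ennreal (alg_cost P D s xs) \<partial>R) \<le> ennreal (\<beta> + 1)"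
    by (simp only: exp_cost_def less_eq_ennreal.rep_eq)
  moreover have "0 \<le> alg_cost P D s xs" if "D \<in> space R" for D
  proof -
    have "det_alg P D"
      using R that by (simp add: rand_alg_def)
    then show ?thesis
      unfolding alg_cost_def using cost_nonneg[OF wf inp det_alg_valid_out[OF _ inp]] by blast
  qed
  moreover have "{D \<in> space R. alg_cost P D s xs \<le> (1 + \<delta>) * (\<beta> + 1)} \<in> R.events"
    using u by measurable
  ultimately show ?thesis
    using R.prob_le_Markov[OF u] \<open>0 \<le> \<beta>\<close> \<open>0 < \<delta>\<close> by simp
qed

lemma advice_from_rand_competitive:
  assumes wf: "wf_problem P" and few: "few_inputs P"
    and R: "rand_alg P R" "rand_competitive P R c" and "0 < \<delta>"
  shows "\<exists>A b. (\<lambda>n. real (b n)) \<in> o(\<lambda>n. real n) \<and> det_adv_competitive P A b ((1 + \<delta>) * c)"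
proof -
  interpret R: prob_space R
    using R(1) by (simp add: rand_alg_def)
  have det: "\<And>D. D \<in> space R \<Longrightarrow> det_alg P D"
    using R(1) by (simp add: rand_alg_def)
  obtain a where a: "\<And>s xs. (s, xs) \<in> inputs P \<Longrightarrow>
      enn2ereal (exp_cost P R s xs) \<le> ereal (c * OPT P s xs + a)"
    using R(2) unfolding rand_competitive_def by blast
  define G where "G \<sigma> = {D \<in> space R.
      alg_cost P D (fst \<sigma>) (snd \<sigma>) \<le> (1 + \<delta>) * ((c * OPT P (fst \<sigma>) (snd \<sigma>) + a) + 1)}" for \<sigma>
  have G: "G \<sigma> \<in> R.events \<and> \<delta> / (1 + \<delta>) \<le> R.prob (G \<sigma>)" if "\<sigma> \<in> inputs P" for \<sigma>
  proof (cases \<sigma>)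
    case (Pair s xs)
    with that have inp: "(s, xs) \<in> inputs P"
      by simp
    show ?thesis
      using prob_alg_cost_le_Markov[OF wf R(1) inp a[OF inp] \<open>0 < \<delta>\<close>] by (simp add: G_def Pair)
  qed
  obtain Q d Ls where Ls: "\<And>n. set (Ls n) \<subseteq> space R" "\<And>n. length (Ls n) \<le> Q * (n + 1) ^ d"
    "\<And>\<sigma>. \<sigma> \<in> inputs P \<Longrightarrow> \<exists>D\<in>set (Ls (length (snd \<sigma>))). D \<in> G \<sigma>"
  proof -
    have "0 < \<delta> / (1 + \<delta>)" "\<delta> / (1 + \<delta>) < 1"
      using \<open>0 < \<delta>\<close> by auto
    then show ?thesis
    proof (rule R.poly_size_hitting_lists[OF few])
      show "\<And>\<sigma>. \<sigma> \<in> inputs P \<Longrightarrow> G \<sigma> \<in> R.events"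
        "\<And>\<sigma>. \<sigma> \<in> inputs P \<Longrightarrow> \<delta> / (1 + \<delta>) \<le> R.prob (G \<sigma>)"
        using G by blast+
    qed (rule that)
  qed
  obtain A b where A: "det_adv_alg P A" "(\<lambda>n. real (b n)) \<in> o(\<lambda>n. real n)"
    "\<And>n D. D \<in> set (Ls n) \<Longrightarrow> \<exists>t. \<forall>t'. (\<forall>j<b n. t' j = t j) \<longrightarrow> A t' = D"
  proof (rule advice_selecting_from_lists[OF _ _ Ls(2)])
    show "\<And>n D. D \<in> set (Ls n) \<Longrightarrow> det_alg P D"
      using Ls(1) det by blast
    show "det_alg P (SOME D. D \<in> space R)"
      using det R.not_empty by (simp add: some_in_eq)
  qed (rule that)
  have "\<exists>t. reads_at_most A t s xs (b (length xs)) \<and>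
      alg_cost P (A t) s xs \<le> (1 + \<delta>) * c * OPT P s xs + (1 + \<delta>) * (a + 1)"
    if inp: "(s, xs) \<in> inputs P" for s xs
  proof -
    obtain D where D: "D \<in> set (Ls (length xs))" "D \<in> G (s, xs)"
      using Ls(3)[OF inp] by auto
    then obtain t where t: "\<forall>t'. (\<forall>j<b (length xs). t' j = t j) \<longrightarrow> A t' = D"
      using A(3) by blast
    then have "reads_at_most A t s xs (b (length xs))" "A t = D"
      unfolding reads_at_most_def by auto
    moreover have "alg_cost P D s xs \<le> (1 + \<delta>) * c * OPT P s xs + (1 + \<delta>) * (a + 1)"
      using D(2) by (simp add: G_def algebra_simps)
    ultimately show ?thesis
      by auto
  qed
  then have "det_adv_competitive P A b ((1 + \<delta>) * c)"
    unfolding det_adv_competitive_def using A(1) by blast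
  with A(2) show ?thesis
    by blast
qed

lemma advice_if_rand_competitive:
  assumes wf: "wf_problem P" and few: "few_inputs P"
    and rand: "\<forall>\<epsilon>>0. \<exists>R. rand_alg P R \<and> rand_competitive P R (c + \<epsilon>)"
  shows "\<forall>\<epsilon>>0. \<exists>A b. (\<lambda>n. real (b n)) \<in> o(\<lambda>n. real n) \<and> det_adv_competitive P A b (c + \<epsilon>)"
proof (intro allI impI)
  fix \<epsilon> :: real assume "0 < \<epsilon>"
  then obtain R where R: "rand_alg P R" "rand_competitive P R (c + \<epsilon> / 2)"
    using rand half_gt_zero by blast
  define \<delta> where "\<delta> = \<epsilon> / (2 * (\<bar>c + \<epsilon> / 2\<bar> + 1))"
  have "0 < \<delta>"
    using \<open>0 < \<epsilon>\<close> unfolding \<delta>_def by (simp add: add_nonneg_pos)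
  then obtain A b where b: "(\<lambda>n. real (b n)) \<in> o(\<lambda>n. real n)"
    and A: "det_adv_competitive P A b ((1 + \<delta>) * (c + \<epsilon> / 2))"
    using advice_from_rand_competitive[OF wf few R] by blast
  have "\<delta> * (c + \<epsilon> / 2) \<le> \<delta> * \<bar>c + \<epsilon> / 2\<bar>"
    using \<open>0 < \<delta>\<close> by (intro mult_left_mono) auto
  also have "\<dots> = \<epsilon> / 2 * (\<bar>c + \<epsilon> / 2\<bar> / (\<bar>c + \<epsilon> / 2\<bar> + 1))"
    by (simp add: \<delta>_def)
  also have "\<dots> \<le> \<epsilon> / 2"
    using \<open>0 < \<epsilon>\<close> by (intro mult_left_le) auto
  finally have "(1 + \<delta>) * (c + \<epsilon> / 2) \<le> c + \<epsilon>"
    by (simp only: distrib_right mult_1)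
  then have "(1 + \<delta>) * (c + \<epsilon> / 2) * OPT P s xs \<le> (c + \<epsilon>) * OPT P s xs + 0"
    if "(s, xs) \<in> inputs P" for s xs
    using mult_right_mono[OF _ OPT_nonneg_if_det_adv_competitive[OF wf A that]] by simp
  then have "det_adv_competitive P A b (c + \<epsilon>)"
    by (rule det_adv_competitive_weaken[OF A])
  with b show "\<exists>A b. (\<lambda>n. real (b n)) \<in> o(\<lambda>n. real n) \<and> det_adv_competitive P A b (c + \<epsilon>)"
    by blast
qed

section \<open>Exponential moments over independent rounds\<close>

text \<open>The expectation of f (pre @ xs) when xs consists of r independent draws from S with weights w.\<close>

fun expect_rounds :: "'a set \<Rightarrow> ('a \<Rightarrow> real) \<Rightarrow> nat \<Rightarrow> ('a list \<Rightarrow> real) \<Rightarrow> 'a list \<Rightarrow> real" where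
  "expect_rounds S w 0 f pre = f pre"
| "expect_rounds S w (Suc r) f pre = (\<Sum>x\<in>S. w x * expect_rounds S w r f (pre @ [x]))"

lemma expect_rounds_sum:
  "finite T \<Longrightarrow> expect_rounds S w r (\<lambda>xs. \<Sum>t\<in>T. f t xs) pre = (\<Sum>t\<in>T. expect_rounds S w r (f t) pre)"
  by (induction r arbitrary: pre) (simp_all add: sum_distrib_left sum.swap[of _ S])

lemma expect_rounds_cmult:
  "expect_rounds S w r (\<lambda>xs. a * f xs) pre = a * expect_rounds S w r f pre"
  by (induction r arbitrary: pre) (simp_all add: sum_distrib_left algebra_simps)

lemma expect_rounds_ge:
  assumes "\<And>x. x \<in> S \<Longrightarrow> 0 \<le> w x" "sum w S = 1"
    and "\<And>ext. set ext \<subseteq> S \<Longrightarrow> length ext = r \<Longrightarrow> a \<le> f (pre @ ext)"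
  shows "a \<le> expect_rounds S w r f pre"
  using assms(3)
proof (induction r arbitrary: pre)
  case 0
  then show ?case using 0[of "[]"] by simp
next
  case (Suc r)
  have "a \<le> expect_rounds S w r f (pre @ [x])" if "x \<in> S" for x
    using Suc.IH[of "pre @ [x]"] Suc.prems[of "x # _"] that by auto
  then have "(\<Sum>x\<in>S. w x * a) \<le> (\<Sum>x\<in>S. w x * expect_rounds S w r f (pre @ [x]))"
    using assms(1) by (intro sum_mono mult_left_mono) auto
  then show ?case
    using assms(2) by (simp add: sum_distrib_right[symmetric])
qed

lemma expect_rounds_exp_le:
  fixes Y :: "'a list \<Rightarrow> nat \<Rightarrow> real"
  assumes w: "\<And>x. x \<in> S \<Longrightarrow> 0 \<le> w x" and "0 \<le> q"
    and prefix: "\<And>pre x i. i < length pre \<Longrightarrow> Y (pre @ [x]) i = Y pre i"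
    and round: "\<And>pre. set pre \<subseteq> S \<Longrightarrow> (\<Sum>x\<in>S. w x * exp (- \<theta> * Y (pre @ [x]) (length pre))) \<le> q"
    and "set pre \<subseteq> S"
  shows "expect_rounds S w r (\<lambda>xs. exp (- \<theta> * (\<Sum>i<length xs. Y xs i))) pre
          \<le> q ^ r * exp (- \<theta> * (\<Sum>i<length pre. Y pre i))"
  using \<open>set pre \<subseteq> S\<close>
proof (induction r arbitrary: pre)
  case 0
  then show ?case by simp
next
  case (Suc r)
  let ?F = "\<lambda>xs. exp (- \<theta> * (\<Sum>i<length xs. Y xs i))"
  have split: "?F (pre @ [x]) = ?F pre * exp (- \<theta> * Y (pre @ [x]) (length pre))" for x
  proof -
    have "(\<Sum>i<length (pre @ [x]). Y (pre @ [x]) i) = (\<Sum>i<length pre. Y pre i) + Y (pre @ [x]) (length pre)"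
      using prefix by simp
    then show ?thesis
      by (simp add: algebra_simps flip: exp_add)
  qed
  have IH: "expect_rounds S w r ?F (pre @ [x]) \<le> q ^ r * ?F (pre @ [x])" if "x \<in> S" for x
  proof -
    have "set (pre @ [x]) \<subseteq> S"
      using Suc.prems that by simp
    then show ?thesis
      by (rule Suc.IH)
  qed
  have "expect_rounds S w (Suc r) ?F pre = (\<Sum>x\<in>S. w x * expect_rounds S w r ?F (pre @ [x]))"
    by (simp only: expect_rounds.simps)
  also have "\<dots> \<le> (\<Sum>x\<in>S. w x * (q ^ r * ?F (pre @ [x])))"
    using IH w by (intro sum_mono mult_left_mono)
  also have "\<dots> = q ^ r * ?F pre * (\<Sum>x\<in>S. w x * exp (- \<theta> * Y (pre @ [x]) (length pre)))"
    unfolding split by (simp add: sum_distrib_left algebra_simps)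
  also have "\<dots> \<le> q ^ r * ?F pre * q"
    using round[OF Suc.prems] \<open>0 \<le> q\<close> by (intro mult_left_mono) auto
  finally show ?case
    by (simp add: algebra_simps)
qed

lemma chernoff_union_bound:
  fixes Y :: "'t \<Rightarrow> 'a list \<Rightarrow> nat \<Rightarrow> real"
  assumes w: "\<And>x. x \<in> S \<Longrightarrow> 0 \<le> w x" "sum w S = 1"
    and "finite T" "0 \<le> q" "0 \<le> \<theta>"
    and prefix: "\<And>t pre x i. i < length pre \<Longrightarrow> Y t (pre @ [x]) i = Y t pre i"
    and round: "\<And>t pre. t \<in> T \<Longrightarrow> set pre \<subseteq> S \<Longrightarrow>
        (\<Sum>x\<in>S. w x * exp (- \<theta> * Y t (pre @ [x]) (length pre))) \<le> q"
    and good: "\<And>xs. set xs \<subseteq> S \<Longrightarrow> length xs = r \<Longrightarrow> \<exists>t\<in>T. (\<Sum>i<r. Y t xs i) \<le> \<beta>"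
  shows "1 \<le> real (card T) * exp (\<theta> * \<beta>) * q ^ r"
proof -
  let ?G = "\<lambda>t xs. exp (\<theta> * \<beta>) * exp (- \<theta> * (\<Sum>i<length xs. Y t xs i))"
  have "1 \<le> (\<Sum>t\<in>T. ?G t xs)" if xs: "set xs \<subseteq> S" "length xs = r" for xs
  proof -
    obtain t where t: "t \<in> T" "(\<Sum>i<r. Y t xs i) \<le> \<beta>"
      using good[OF xs] by blast
    have "1 \<le> exp (\<theta> * \<beta> - \<theta> * (\<Sum>i<r. Y t xs i))"
      using mult_left_mono[OF t(2) \<open>0 \<le> \<theta>\<close>] by simp
    also have "\<dots> = ?G t xs"
      using xs by (simp add: exp_diff exp_minus field_simps)
    also have "\<dots> \<le> (\<Sum>t\<in>T. ?G t xs)"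
      using t(1) \<open>finite T\<close> by (intro member_le_sum) auto
    finally show ?thesis .
  qed
  then have "1 \<le> expect_rounds S w r (\<lambda>xs. \<Sum>t\<in>T. ?G t xs) []"
    by (intro expect_rounds_ge[OF w]) auto
  also have "\<dots> = (\<Sum>t\<in>T. exp (\<theta> * \<beta>) * expect_rounds S w r (\<lambda>xs. exp (- \<theta> * (\<Sum>i<length xs. Y t xs i))) [])"
    by (simp add: expect_rounds_sum[OF \<open>finite T\<close>] expect_rounds_cmult)
  also have "\<dots> \<le> (\<Sum>t\<in>T. exp (\<theta> * \<beta>) * q ^ r)"
    using expect_rounds_exp_le[OF w(1) \<open>0 \<le> q\<close> prefix round, of _ "[]" r]
    by (intro sum_mono mult_left_mono) auto
  finally show ?thesis
    by simp
qed

lemma exp_le_one_plus_plus_square: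
  fixes z :: real
  assumes "\<bar>z\<bar> \<le> 1"
  shows "exp z \<le> 1 + z + z\<^sup>2"
proof (cases "0 \<le> z")
  case True
  then show ?thesis using exp_bound assms by simp
next
  case False
  have "1 - z \<le> exp (- z)"
    using exp_ge_add_one_self[of "- z"] by simp
  moreover have "0 \<le> 1 + z + z\<^sup>2"
    using sum_power2_ge_zero[of "z + 1/2" 0] by (simp add: power2_eq_square algebra_simps)
  ultimately have "(1 - z) * (1 + z + z\<^sup>2) \<le> exp (- z) * (1 + z + z\<^sup>2)"
    by (rule mult_right_mono)
  moreover have "(1 - z) * (1 + z + z\<^sup>2) = 1 - z ^ 3"
    by (simp add: algebra_simps power2_eq_square power3_eq_cube)
  moreover have "z ^ 3 \<le> 0"
    using mult_nonneg_nonpos[of "z\<^sup>2" z] False by (simp add: power3_eq_cube power2_eq_square)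
  ultimately have "1 \<le> exp (- z) * (1 + z + z\<^sup>2)"
    by linarith
  then show ?thesis
    by (simp add: exp_minus field_simps)
qed

lemma exp_moment_le:
  fixes Y w :: "'a \<Rightarrow> real"
  assumes w: "\<And>x. x \<in> S \<Longrightarrow> 0 \<le> w x" "sum w S = 1"
    and Y: "\<And>x. x \<in> S \<Longrightarrow> \<bar>Y x\<bar> \<le> W" and mean: "\<alpha> \<le> (\<Sum>x\<in>S. w x * Y x)"
    and "0 \<le> \<theta>" "\<theta> * W \<le> 1"
  shows "(\<Sum>x\<in>S. w x * exp (- \<theta> * Y x)) \<le> exp (- \<theta> * \<alpha> + \<theta>\<^sup>2 * W\<^sup>2)"
proof -
  have "exp (- \<theta> * Y x) \<le> 1 - \<theta> * Y x + \<theta>\<^sup>2 * W\<^sup>2" if "x \<in> S" for x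
  proof -
    have "\<bar>\<theta> * Y x\<bar> \<le> \<theta> * W"
      using mult_left_mono[OF Y[OF that] \<open>0 \<le> \<theta>\<close>] \<open>0 \<le> \<theta>\<close> by (simp add: abs_mult)
    then have "\<bar>- \<theta> * Y x\<bar> \<le> 1" "(\<theta> * Y x)\<^sup>2 \<le> \<theta>\<^sup>2 * W\<^sup>2"
      using \<open>\<theta> * W \<le> 1\<close> power_mono[of "\<bar>\<theta> * Y x\<bar>" "\<theta> * W" 2] by (auto simp: power_mult_distrib)
    then show ?thesis
      using exp_le_one_plus_plus_square[of "- \<theta> * Y x"] by simp
  qed
  then have "(\<Sum>x\<in>S. w x * exp (- \<theta> * Y x)) \<le> (\<Sum>x\<in>S. w x * (1 - \<theta> * Y x + \<theta>\<^sup>2 * W\<^sup>2))"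
    using w(1) by (intro sum_mono mult_left_mono) auto
  also have "\<dots> = 1 - \<theta> * (\<Sum>x\<in>S. w x * Y x) + \<theta>\<^sup>2 * W\<^sup>2"
    using w(2) by (simp add: algebra_simps sum.distrib sum_subtractf sum_distrib_left
        flip: sum_distrib_right)
  also have "\<dots> \<le> 1 + (- \<theta> * \<alpha> + \<theta>\<^sup>2 * W\<^sup>2)"
    using mult_left_mono[OF mean \<open>0 \<le> \<theta>\<close>] by simp
  also have "\<dots> \<le> exp (- \<theta> * \<alpha> + \<theta>\<^sup>2 * W\<^sup>2)"
    by (rule exp_ge_add_one_self)
  finally show ?thesis .
qed

section \<open>Hard input distributions on a single initial state\<close>

definition hard_on_state ::
    "('s, 'x, 'y) online_problem \<Rightarrow> real \<Rightarrow> real \<Rightarrow> 's \<Rightarrow> 'x list set \<Rightarrow> ('x list \<Rightarrow> real) \<Rightarrow> bool" where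
  "hard_on_state P c \<alpha> s S w \<longleftrightarrow> finite S \<and> (\<forall>xs\<in>S. xs \<noteq> [] \<and> (s, xs) \<in> inputs P \<and> 0 \<le> w xs) \<and>
     sum w S = 1 \<and> (\<forall>D. det_alg P D \<longrightarrow> \<alpha> \<le> (\<Sum>xs\<in>S. w xs * (alg_cost P D s xs - c * OPT P s xs)))"

lemma finite_fiber: "finite N \<Longrightarrow> finite {x. (s, x) \<in> N}"
  by (rule finite_subset[of _ "snd ` N"]) force+

lemma sum_by_fst:
  assumes "finite N"
  shows "(\<Sum>\<sigma>\<in>N. f \<sigma>) = (\<Sum>s\<in>fst ` N. \<Sum>x\<in>{x. (s, x) \<in> N}. f (s, x))"
proof -
  have N: "Sigma (fst ` N) (\<lambda>s. {x. (s, x) \<in> N}) = N"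
    by force
  have "(\<Sum>s\<in>fst ` N. \<Sum>x\<in>{x. (s, x) \<in> N}. f (s, x))
      = (\<Sum>(s, x)\<in>Sigma (fst ` N) (\<lambda>s. {x. (s, x) \<in> N}). f (s, x))"
    using assms finite_fiber by (intro sum.Sigma) auto
  then show ?thesis
    by (simp only: case_prod_eta N)
qed

text \<open>Algorithms may be chosen separately for each initial state; this is why some single initial
  state inherits the hardness.\<close>

lemma hard_fiber_of_hard_weights:
  fixes P :: "('s, 'x, 'y) online_problem" and N :: "('s \<times> 'x list) set"
  assumes N: "finite N" "sum q N \<le> 1" and D0: "det_alg P D0" and "0 < \<alpha>"
    and gap: "\<And>D. det_alg P D \<Longrightarrow> \<alpha> \<le> (\<Sum>\<sigma>\<in>N. q \<sigma> * (alg_cost P D (fst \<sigma>) (snd \<sigma>) - c * OPT P (fst \<sigma>) (snd \<sigma>)))"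
  shows "\<exists>s\<in>fst ` N. \<forall>D. det_alg P D \<longrightarrow> \<alpha> * (\<Sum>xs\<in>{xs. (s, xs) \<in> N}. q (s, xs))
           \<le> (\<Sum>xs\<in>{xs. (s, xs) \<in> N}. q (s, xs) * (alg_cost P D s xs - c * OPT P s xs))"
proof (rule ccontr)
  assume "\<not> ?thesis"
  then have "\<forall>s\<in>fst ` N. \<exists>D. det_alg P D \<and>
      (\<Sum>xs\<in>{xs. (s, xs) \<in> N}. q (s, xs) * (alg_cost P D s xs - c * OPT P s xs))
        < \<alpha> * (\<Sum>xs\<in>{xs. (s, xs) \<in> N}. q (s, xs))"
    by (simp add: not_le)
  then obtain Ds where Ds: "\<forall>s\<in>fst ` N. det_alg P (Ds s) \<and>
      (\<Sum>xs\<in>{xs. (s, xs) \<in> N}. q (s, xs) * (alg_cost P (Ds s) s xs - c * OPT P s xs))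
        < \<alpha> * (\<Sum>xs\<in>{xs. (s, xs) \<in> N}. q (s, xs))"
    by (rule bchoice[THEN exE])
  define D where "D = (\<lambda>s. (if s \<in> fst ` N then Ds s else D0) s)"
  have "det_alg P D"
    unfolding D_def by (rule det_alg_statewise) (use Ds D0 in auto)
  have cost_D: "alg_cost P D s xs = alg_cost P (Ds s) s xs" if "s \<in> fst ` N" for s xs
    using alg_cost_statewise[of P "\<lambda>s. if s \<in> fst ` N then Ds s else D0" s xs] that
    unfolding D_def by simp
  have "N \<noteq> {}"
    using gap[OF D0] \<open>0 < \<alpha>\<close> by auto
  have "\<alpha> \<le> (\<Sum>s\<in>fst ` N. \<Sum>xs\<in>{xs. (s, xs) \<in> N}. q (s, xs) * (alg_cost P D s xs - c * OPT P s xs))"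
    using gap[OF \<open>det_alg P D\<close>] by (simp add: sum_by_fst[OF N(1)])
  also have "\<dots> < (\<Sum>s\<in>fst ` N. \<alpha> * (\<Sum>xs\<in>{xs. (s, xs) \<in> N}. q (s, xs)))"
    using Ds \<open>N \<noteq> {}\<close> N(1) by (intro sum_strict_mono) (auto simp: cost_D)
  also have "\<dots> = \<alpha> * sum q N"
    by (simp add: sum_by_fst[OF N(1)] sum_distrib_left)
  also have "\<dots> \<le> \<alpha>"
    using N(2) \<open>0 < \<alpha>\<close> by simp
  finally show False
    by simp
qed

lemma hard_state_of_hard_weights:
  fixes P :: "('s, 'x, 'y) online_problem" and N :: "('s \<times> 'x list) set"
  assumes N: "finite N" "\<And>\<sigma>. \<sigma> \<in> N \<Longrightarrow> 0 < q \<sigma> \<and> snd \<sigma> \<noteq> [] \<and> \<sigma> \<in> inputs P" "sum q N \<le> 1"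
    and D0: "det_alg P D0" and "0 < \<alpha>"
    and gap: "\<And>D. det_alg P D \<Longrightarrow> \<alpha> \<le> (\<Sum>\<sigma>\<in>N. q \<sigma> * (alg_cost P D (fst \<sigma>) (snd \<sigma>) - c * OPT P (fst \<sigma>) (snd \<sigma>)))"
  shows "\<exists>s S w. hard_on_state P c \<alpha> s S w"
proof -
  obtain s where s: "s \<in> fst ` N" and hard: "\<And>D. det_alg P D \<Longrightarrow>
      \<alpha> * (\<Sum>xs\<in>{xs. (s, xs) \<in> N}. q (s, xs))
        \<le> (\<Sum>xs\<in>{xs. (s, xs) \<in> N}. q (s, xs) * (alg_cost P D s xs - c * OPT P s xs))"
    using hard_fiber_of_hard_weights[OF N(1,3) D0 \<open>0 < \<alpha>\<close> gap] by blast
  define S where "S = {xs. (s, xs) \<in> N}"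
  define m where "m = (\<Sum>xs\<in>S. q (s, xs))"
  have "finite S"
    unfolding S_def using N(1) by (rule finite_fiber)
  have "0 < m"
    unfolding m_def using s N(2) \<open>finite S\<close> by (intro sum_pos) (force simp: S_def)+
  have "\<forall>xs\<in>S. xs \<noteq> [] \<and> (s, xs) \<in> inputs P \<and> 0 \<le> q (s, xs) / m"
    using N(2) \<open>0 < m\<close> by (force simp: S_def less_imp_le)
  moreover have "(\<Sum>xs\<in>S. q (s, xs) / m) = 1"
    using \<open>0 < m\<close> by (simp add: m_def flip: sum_divide_distrib)
  moreover have "\<alpha> \<le> (\<Sum>xs\<in>S. q (s, xs) / m * (alg_cost P D s xs - c * OPT P s xs))"
    if "det_alg P D" for D
    using hard[OF that] \<open>0 < m\<close>
    by (simp add: S_def m_def pos_le_divide_eq sum_divide_distrib[symmetric])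
  ultimately have "hard_on_state P c \<alpha> s S (\<lambda>xs. q (s, xs) / m)"
    unfolding hard_on_state_def using \<open>finite S\<close> by blast
  then show ?thesis
    by blast
qed

lemma hard_distribution_on_one_state:
  fixes P :: "('s, 'x, 'y) online_problem" and p :: "('s \<times> 'x list) pmf"
  assumes wf: "wf_problem P" and D0: "det_alg P D0" and "1 \<le> c" "0 < \<alpha>"
    and p: "finite (set_pmf p)" "set_pmf p \<subseteq> inputs P"
    and hard: "\<And>D. det_alg P D \<Longrightarrow> c * measure_pmf.expectation p (\<lambda>(s, xs). OPT P s xs) + \<alpha>
                 \<le> measure_pmf.expectation p (\<lambda>(s, xs). alg_cost P D s xs)"
  shows "\<exists>s S w. hard_on_state P c \<alpha> s S w"
proof (rule hard_state_of_hard_weights[OF _ _ _ D0 \<open>0 < \<alpha>\<close>])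
  define N where "N = {\<sigma> \<in> set_pmf p. snd \<sigma> \<noteq> []}"
  define Z where "Z D \<sigma> = alg_cost P D (fst \<sigma>) (snd \<sigma>) - c * OPT P (fst \<sigma>) (snd \<sigma>)" for D \<sigma>
  show "finite N" "\<And>\<sigma>. \<sigma> \<in> N \<Longrightarrow> 0 < pmf p \<sigma> \<and> snd \<sigma> \<noteq> [] \<and> \<sigma> \<in> inputs P"
    using p by (auto simp: N_def pmf_positive)
  have "sum (pmf p) N \<le> sum (pmf p) (set_pmf p)"
    using p(1) by (intro sum_mono2) (auto simp: N_def)
  then show "sum (pmf p) N \<le> 1"
    using sum_pmf_eq_1[OF p(1)] by simp
  fix D assume D: "det_alg P D"
  \<comment> \<open>Empty inputs cannot be rounds of the repeated problem; dropping them is harmless since c \<ge> 1.\<close>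
  have "\<alpha> \<le> (\<Sum>\<sigma>\<in>set_pmf p. pmf p \<sigma> * Z D \<sigma>)"
    using hard[OF D] by (simp add: integral_measure_pmf_real[OF p(1)] Z_def split_beta
        algebra_simps sum_subtractf sum_distrib_left)
  also have "\<dots> = (\<Sum>\<sigma>\<in>set_pmf p - N. pmf p \<sigma> * Z D \<sigma>) + (\<Sum>\<sigma>\<in>N. pmf p \<sigma> * Z D \<sigma>)"
    using p(1) by (intro sum.subset_diff) (auto simp: N_def)
  also have "(\<Sum>\<sigma>\<in>set_pmf p - N. pmf p \<sigma> * Z D \<sigma>) \<le> 0"
  proof (intro sum_nonpos mult_nonneg_nonpos)
    fix \<sigma> assume "\<sigma> \<in> set_pmf p - N"
    then obtain s where "\<sigma> = (s, [])" "(s, []) \<in> inputs P"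
      using p(2) by (cases \<sigma>) (auto simp: N_def)
    then show "Z D \<sigma> \<le> 0"
      using alg_cost_Nil_le[OF wf _ \<open>1 \<le> c\<close>] by (simp add: Z_def)
  qed simp
  finally show "\<alpha> \<le> (\<Sum>\<sigma>\<in>N. pmf p \<sigma> * (alg_cost P D (fst \<sigma>) (snd \<sigma>) - c * OPT P (fst \<sigma>) (snd \<sigma>)))"
    by (simp add: Z_def)
qed

section \<open>The repeated problem\<close>

lemma sigma_repeatableE:
  fixes P :: "('s, 'x, 'y) online_problem"
  assumes "sigma_repeatable P"
  obtains k1 g k3 and rep :: "('s \<Rightarrow> 'x list \<Rightarrow> 'y) \<Rightarrow> 's \<Rightarrow> 'x list list \<Rightarrow> 'x list \<Rightarrow> 'y"
    and k2 :: real
  where "0 \<le> k1"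
    "\<And>s xss. (s, xss) \<in> rep_inputs P \<Longrightarrow> g (s, xss) \<in> inputs P"
    "\<And>s xss. (s, xss) \<in> rep_inputs P \<Longrightarrow>
        real (length (snd (g (s, xss)))) \<le> real (rep_length xss) + k1 * real (length xss)"
    "\<And>s xss. (s, xss) \<in> rep_inputs P \<Longrightarrow>
        OPT P (fst (g (s, xss))) (snd (g (s, xss))) - k3 * real (length xss) \<le> rep_OPT P s xss"
    "\<And>D. det_alg P D \<Longrightarrow> det_rep_alg P (rep D)"
    "\<And>D s xss. det_alg P D \<Longrightarrow> (s, xss) \<in> rep_inputs P \<Longrightarrow>
        rep_cost P (rep D) s xss \<le> alg_cost P D (fst (g (s, xss))) (snd (g (s, xss))) + k2 * real (length xss)"
proof -
  obtain k1 k2 k3 :: real and g where "0 \<le> k1"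
    and g: "\<forall>(s, xss)\<in>rep_inputs P. g (s, xss) \<in> inputs P \<and>
        real (length (snd (g (s, xss)))) \<le> real (rep_length xss) + k1 * real (length xss) \<and>
        rep_OPT P s xss \<ge> OPT P (fst (g (s, xss))) (snd (g (s, xss))) - k3 * real (length xss)"
    and A: "\<forall>D. det_alg P D \<longrightarrow> (\<exists>A. det_rep_alg P A \<and> (\<forall>(s, xss)\<in>rep_inputs P.
        rep_cost P A s xss \<le> alg_cost P D (fst (g (s, xss))) (snd (g (s, xss))) + k2 * real (length xss)))"
    using assms unfolding sigma_repeatable_def by blast
  define rep where "rep D = (SOME A. det_rep_alg P A \<and> (\<forall>(s, xss)\<in>rep_inputs P.
      rep_cost P A s xss \<le> alg_cost P D (fst (g (s, xss))) (snd (g (s, xss))) + k2 * real (length xss)))" for D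
  have rep: "det_rep_alg P (rep D) \<and> (\<forall>(s, xss)\<in>rep_inputs P.
      rep_cost P (rep D) s xss \<le> alg_cost P D (fst (g (s, xss))) (snd (g (s, xss))) + k2 * real (length xss))"
    if "det_alg P D" for D
  proof -
    have "\<exists>A. det_rep_alg P A \<and> (\<forall>(s, xss)\<in>rep_inputs P.
        rep_cost P A s xss \<le> alg_cost P D (fst (g (s, xss))) (snd (g (s, xss))) + k2 * real (length xss))"
      using A that by blast
    then show ?thesis
      unfolding rep_def by (rule someI_ex)
  qed
  show ?thesis
  proof (rule that[of k1 g k3 rep k2, OF \<open>0 \<le> k1\<close>])
    fix D s xss assume "det_alg P D" "(s, xss) \<in> rep_inputs P"
    then show "rep_cost P (rep D) s xss \<le> alg_cost P D (fst (g (s, xss))) (snd (g (s, xss))) + k2 * real (length xss)"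
      using rep[OF \<open>det_alg P D\<close>] by auto
  qed (use g rep in auto)
qed

lemma rep_run_snoc_prefix: "i < length pre \<Longrightarrow> rep_run A s (pre @ [x]) i = rep_run A s pre i"
  by (simp add: rep_run_def nth_append)

lemma rep_run_snoc_last: "rep_run A s (pre @ [x]) (length pre) = run (\<lambda>_ ys. A s pre ys) s x"
  by (simp add: rep_run_def)

lemma rep_length_le: "(\<And>xs. xs \<in> set xss \<Longrightarrow> length xs \<le> L) \<Longrightarrow> rep_length xss \<le> length xss * L"
  unfolding rep_length_def using sum_list_mono[of xss length "\<lambda>_. L"] by (simp add: sum_list_triv)

lemma rep_OPT_le_sum_OPT:
  assumes wf: "wf_problem P" and rep: "(s, xss) \<in> rep_inputs P"
    and fin: "\<And>xs. xs \<in> set xss \<Longrightarrow> finite {ys. valid_out P s xs ys}"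
    and D: "det_alg P D"
  shows "rep_OPT P s xss \<le> (\<Sum>i<length xss. OPT P s (xss ! i))"
proof -
  have inp: "(s, xss ! i) \<in> inputs P" if "i < length xss" for i
    using rep that unfolding rep_inputs_def by auto
  have "\<exists>ys. valid_out P s (xss ! i) ys \<and> cost P s (xss ! i) ys = OPT P s (xss ! i)"
    if "i < length xss" for i
    by (rule OPT_attained[OF fin det_alg_valid_out[OF D inp]]) (use that in auto)
  then obtain f where f: "\<And>i. i < length xss \<Longrightarrow>
      valid_out P s (xss ! i) (f i) \<and> cost P s (xss ! i) (f i) = OPT P s (xss ! i)"
    by metis
  define yss where "yss = map f [0..<length xss]"
  have "rep_OPT P s xss \<le> (\<Sum>i<length xss. cost P s (xss ! i) (yss ! i))"
    unfolding rep_OPT_def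
  proof (rule cInf_lower)
    show "(\<Sum>i<length xss. cost P s (xss ! i) (yss ! i)) \<in> {\<Sum>i<length xss. cost P s (xss ! i) (yss ! i) |yss.
        length yss = length xss \<and> (\<forall>i<length xss. valid_out P s (xss ! i) (yss ! i))}"
    proof -
      have "length yss = length xss \<and> (\<forall>i<length xss. valid_out P s (xss ! i) (yss ! i))"
        using f by (simp add: yss_def)
      then show ?thesis by blast
    qed
    show "bdd_below {\<Sum>i<length xss. cost P s (xss ! i) (yss ! i) |yss.
        length yss = length xss \<and> (\<forall>i<length xss. valid_out P s (xss ! i) (yss ! i))}"
      by (rule bdd_belowI[of _ 0]) (auto intro!: sum_nonneg cost_nonneg[OF wf inp])
  qed
  also have "\<dots> = (\<Sum>i<length xss. OPT P s (xss ! i))"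
    using f by (simp add: yss_def)
  finally show ?thesis .
qed

lemma det_alg_rep_round:
  assumes A: "det_rep_alg P A" and D0: "det_alg P D0"
    and pre: "\<And>xs. xs \<in> set pre \<Longrightarrow> xs \<noteq> [] \<and> (s, xs) \<in> inputs P"
  shows "det_alg P (\<lambda>s' ys. if s' = s then A s pre ys else D0 s' ys)"
    (is "det_alg P ?D")
proof -
  have "valid_out P s xs (run (\<lambda>_ ys. A s pre ys) s xs)" if "(s, xs) \<in> inputs P" for xs
  proof (cases "xs = []")
    case True
    then show ?thesis by (simp add: valid_out_def run_def)
  next
    case False
    with pre that have "(s, pre @ [xs]) \<in> rep_inputs P"
      by (auto simp: rep_inputs_def)
    with A have "valid_out P s ((pre @ [xs]) ! length pre) (rep_run A s (pre @ [xs]) (length pre))"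
      unfolding det_rep_alg_def by fastforce
    then show ?thesis
      by (simp add: rep_run_def)
  qed
  moreover have "run ?D s' xs = (if s' = s then run (\<lambda>_ ys. A s pre ys) s xs else run D0 s' xs)" for s' xs
    by (simp add: run_def)
  ultimately show ?thesis
    using D0 unfolding det_alg_def by auto
qed

definition bounded_tapes :: "nat \<Rightarrow> (nat \<Rightarrow> bool) set" where
  "bounded_tapes m = {t. \<forall>j\<ge>m. \<not> t j}"

lemma bounded_tapes_eq_image: "bounded_tapes m = (\<lambda>X j. j \<in> X) ` Pow {..<m}"
proof
  show "bounded_tapes m \<subseteq> (\<lambda>X j. j \<in> X) ` Pow {..<m}"
  proof
    fix t assume "t \<in> bounded_tapes m"
    then have "{j. t j} \<in> Pow {..<m}"
      by (auto simp: bounded_tapes_def not_less[symmetric])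
    moreover have "t = (\<lambda>j. j \<in> {j. t j})"
      by simp
    ultimately show "t \<in> (\<lambda>X j. j \<in> X) ` Pow {..<m}"
      by blast
  qed
qed (unfold bounded_tapes_def, force)

lemma finite_bounded_tapes: "finite (bounded_tapes m)"
  by (simp add: bounded_tapes_eq_image)

lemma card_bounded_tapes_le: "card (bounded_tapes m) \<le> 2 ^ m"
  unfolding bounded_tapes_eq_image using card_image_le[of "Pow {..<m}" "\<lambda>X j. j \<in> X"]
  by (simp add: card_Pow)

lemma reads_at_most_truncate:
  assumes "reads_at_most A t s xs k" "k \<le> m"
  shows "(\<lambda>j. j < m \<and> t j) \<in> bounded_tapes m" "run (A (\<lambda>j. j < m \<and> t j)) s xs = run (A t) s xs"
proof -
  show "(\<lambda>j. j < m \<and> t j) \<in> bounded_tapes m"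
    by (simp add: bounded_tapes_def)
  have "\<forall>j<k. (j < m \<and> t j) = t j"
    using \<open>k \<le> m\<close> by simp
  moreover from assms(1) have "(\<forall>j<k. (j < m \<and> t j) = t j) \<longrightarrow>
      run (A (\<lambda>j. j < m \<and> t j)) s xs = run (A t) s xs"
    unfolding reads_at_most_def by (rule spec)
  ultimately show "run (A (\<lambda>j. j < m \<and> t j)) s xs = run (A t) s xs"
    by (rule rev_mp)
qed

lemma rep_cost_bound_with_short_tape:
  assumes wf: "wf_problem P" and rep: "(s, xss) \<in> rep_inputs P"
    and fin: "\<And>xs. xs \<in> set xss \<Longrightarrow> finite {ys. valid_out P s xs ys}" and D: "det_alg P D"
    and len: "real (length xs') \<le> real (rep_length xss) + k1 * real (length xss)"
    and L: "\<And>xs. xs \<in> set xss \<Longrightarrow> length xs \<le> L"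
    and b: "\<And>n. real (b n) \<le> \<eta> * real n + K" and "0 \<le> \<eta>" "0 \<le> c"
    and OPT: "OPT P s' xs' - k3 * real (length xss) \<le> rep_OPT P s xss"
    and RA: "\<And>t. rep_cost P (RA t) s xss \<le> alg_cost P (A t) s' xs' + k2 * real (length xss)"
    and adv: "\<exists>t. reads_at_most A t s' xs' (b (length xs')) \<and> alg_cost P (A t) s' xs' \<le> c * OPT P s' xs' + a"
  shows "\<exists>t\<in>bounded_tapes (nat \<lfloor>\<eta> * (real L + k1) * real (length xss) + K\<rfloor>).
           rep_cost P (RA t) s xss
             \<le> c * (\<Sum>i<length xss. OPT P s (xss ! i)) + (c * k3 + k2) * real (length xss) + a"
proof -
  define m where "m = nat \<lfloor>\<eta> * (real L + k1) * real (length xss) + K\<rfloor>"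
  have "real (rep_length xss) \<le> real (length xss) * real L"
    using rep_length_le[OF L] by (metis of_nat_le_iff of_nat_mult)
  with len have "real (length xs') \<le> (real L + k1) * real (length xss)"
    by (simp add: algebra_simps)
  with b[of "length xs'"] mult_left_mono[OF _ \<open>0 \<le> \<eta>\<close>]
  have "real (b (length xs')) \<le> \<eta> * (real L + k1) * real (length xss) + K"
    by (fastforce simp: mult.assoc)
  then have "b (length xs') \<le> m"
    unfolding m_def by (rule le_nat_floor)
  obtain t where t: "reads_at_most A t s' xs' (b (length xs'))" "alg_cost P (A t) s' xs' \<le> c * OPT P s' xs' + a"
    using adv by blast
  define t' where "t' = (\<lambda>j. j < m \<and> t j)"
  have t': "t' \<in> bounded_tapes m" "alg_cost P (A t') s' xs' = alg_cost P (A t) s' xs'"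
    using reads_at_most_truncate[OF t(1) \<open>b (length xs') \<le> m\<close>] by (simp_all add: t'_def alg_cost_def)
  have "OPT P s' xs' \<le> (\<Sum>i<length xss. OPT P s (xss ! i)) + k3 * real (length xss)"
    using OPT rep_OPT_le_sum_OPT[OF wf rep fin D] by linarith
  from mult_left_mono[OF this \<open>0 \<le> c\<close>]
  have "c * OPT P s' xs' \<le> c * (\<Sum>i<length xss. OPT P s (xss ! i)) + c * k3 * real (length xss)"
    by (simp add: algebra_simps)
  then have "rep_cost P (RA t') s xss
      \<le> c * (\<Sum>i<length xss. OPT P s (xss ! i)) + (c * k3 + k2) * real (length xss) + a"
    using RA[of t'] t(2) t'(2) by (simp add: algebra_simps)
  with t'(1) show ?thesis
    unfolding m_def by blast
qed

lemma smallo_imp_linear_bound: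
  assumes "(\<lambda>n. real (b n)) \<in> o(\<lambda>n. real n)" "0 < \<eta>"
  obtains K where "0 \<le> K" "\<And>n. real (b n) \<le> \<eta> * real n + K"
proof -
  have "eventually (\<lambda>n. real (b n) \<le> \<eta> * real n) sequentially"
    using landau_o.smallD[OF assms] by simp
  then obtain N where N: "\<And>n. N \<le> n \<Longrightarrow> real (b n) \<le> \<eta> * real n"
    unfolding eventually_sequentially by blast
  define K where "K = (\<Sum>n<N. real (b n))"
  have "0 \<le> K"
    by (simp add: K_def sum_nonneg)
  have "real (b n) \<le> \<eta> * real n + K" for n
  proof (cases "N \<le> n")
    case True
    then show ?thesis
      using N[OF True] \<open>0 \<le> K\<close> by linarith
  next
    case False
    then have "real (b n) \<le> K"
      unfolding K_def by (intro member_le_sum) auto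
    moreover have "0 \<le> \<eta> * real n"
      using \<open>0 < \<eta>\<close> by simp
    ultimately show ?thesis
      by linarith
  qed
  with \<open>0 \<le> K\<close> show ?thesis
    using that by blast
qed

lemma pow2_le_exp: "(2::real) ^ n \<le> exp (real n)"
proof -
  have "(2::real) ^ n \<le> exp 1 ^ n"
    using exp_ge_add_one_self[of 1] by (intro power_mono) simp_all
  then show ?thesis
    by (simp add: exp_of_nat_mult[symmetric])
qed

lemma ex_exp_diff_less_1:
  fixes K \<theta> :: real
  assumes "0 < \<theta>"
  shows "\<exists>r::nat. 1 \<le> r \<and> exp (K - \<theta> * real r) < 1"
proof -
  obtain n :: nat where "K / \<theta> < real n"
    using reals_Archimedean2 by blast
  then have "K < \<theta> * real (Suc n)"
    using \<open>0 < \<theta>\<close> by (simp add: pos_divide_less_eq algebra_simps)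
  then show ?thesis
    by (intro exI[of _ "Suc n"]) simp
qed

locale hard_rounds =
  fixes P :: "('s, 'x, 'y) online_problem" and c \<alpha> :: real and s :: 's and S :: "'x list set"
    and w :: "'x list \<Rightarrow> real"
  assumes wf: "wf_problem P"
    and finite_valid: "\<And>xs. xs \<in> S \<Longrightarrow> finite {ys. valid_out P s xs ys}"
    and hard: "hard_on_state P c \<alpha> s S w"
begin

lemma
  shows finite_S: "finite S"
    and S_inputs: "\<And>xs. xs \<in> S \<Longrightarrow> xs \<noteq> [] \<and> (s, xs) \<in> inputs P"
    and weights: "\<And>xs. xs \<in> S \<Longrightarrow> 0 \<le> w xs" "sum w S = 1"
    and hard_alg: "\<And>D. det_alg P D \<Longrightarrow> \<alpha> \<le> (\<Sum>xs\<in>S. w xs * (alg_cost P D s xs - c * OPT P s xs))"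
  using hard unfolding hard_on_state_def by auto

definition excess :: "('s \<Rightarrow> 'x list list \<Rightarrow> 'x list \<Rightarrow> 'y) \<Rightarrow> 'x list list \<Rightarrow> nat \<Rightarrow> real" where
  "excess A xss i = cost P s (xss ! i) (rep_run A s xss i) - c * OPT P s (xss ! i)"

definition cost_range :: real where
  "cost_range = 1 + (\<Sum>xs\<in>S. (\<Sum>ys\<in>{ys. valid_out P s xs ys}. \<bar>cost P s xs ys\<bar>) + \<bar>c * OPT P s xs\<bar>)"

text \<open>Chosen so that rate * cost_range \<le> 1 and rate^2 * cost_range^2 = rate / 2.\<close>

definition rate :: real where
  "rate = 1 / (2 * cost_range\<^sup>2)"

lemma cost_range_ge_1: "1 \<le> cost_range"
  unfolding cost_range_def by (auto intro!: sum_nonneg add_nonneg_nonneg)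

lemma rate_pos: "0 < rate"
  using cost_range_ge_1 by (simp add: rate_def)

lemma abs_excess_le_cost_range:
  assumes "xs \<in> S" "valid_out P s xs ys"
  shows "\<bar>cost P s xs ys - c * OPT P s xs\<bar> \<le> cost_range"
proof -
  have "\<bar>cost P s xs ys\<bar> \<le> (\<Sum>ys\<in>{ys. valid_out P s xs ys}. \<bar>cost P s xs ys\<bar>)"
    using assms finite_valid by (intro member_le_sum) auto
  also have "\<dots> + \<bar>c * OPT P s xs\<bar> \<le> (\<Sum>xs\<in>S. (\<Sum>ys\<in>{ys. valid_out P s xs ys}. \<bar>cost P s xs ys\<bar>) + \<bar>c * OPT P s xs\<bar>)"
    using assms(1) finite_S by (intro member_le_sum) (auto intro: sum_nonneg)
  finally show ?thesis
    unfolding cost_range_def by linarith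
qed

lemma excess_snoc_prefix: "i < length pre \<Longrightarrow> excess A (pre @ [x]) i = excess A pre i"
  by (simp add: excess_def rep_run_snoc_prefix nth_append)

lemma excess_exp_moment:
  assumes A: "det_rep_alg P A" and D0: "det_alg P D0" and pre: "set pre \<subseteq> S"
    and "0 \<le> \<theta>" "\<theta> * cost_range \<le> 1"
  shows "(\<Sum>x\<in>S. w x * exp (- \<theta> * excess A (pre @ [x]) (length pre)))
           \<le> exp (- \<theta> * \<alpha> + \<theta>\<^sup>2 * cost_range\<^sup>2)"
proof -
  define D where "D = (\<lambda>s' ys. if s' = s then A s pre ys else D0 s' ys)"
  have D: "det_alg P D"
    unfolding D_def by (rule det_alg_rep_round[OF A D0]) (use pre S_inputs in auto)
  have "run D s x = rep_run A s (pre @ [x]) (length pre)" for x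
    unfolding rep_run_snoc_last D_def by (rule run_cong) simp
  then have excess_eq: "excess A (pre @ [x]) (length pre) = alg_cost P D s x - c * OPT P s x" for x
    by (simp add: excess_def alg_cost_def)
  show ?thesis
    unfolding excess_eq
  proof (rule exp_moment_le[OF weights _ hard_alg[OF D] \<open>0 \<le> \<theta>\<close> \<open>\<theta> * cost_range \<le> 1\<close>])
    fix x assume "x \<in> S"
    then show "\<bar>alg_cost P D s x - c * OPT P s x\<bar> \<le> cost_range"
      unfolding alg_cost_def using S_inputs det_alg_valid_out[OF D]
      by (intro abs_excess_le_cost_range) auto
  qed
qed

lemma card_ge_if_some_excess_bounded:
  assumes D0: "det_alg P D0" and T: "finite T" "\<And>A. A \<in> T \<Longrightarrow> det_rep_alg P A"
    and good: "\<And>xss. set xss \<subseteq> S \<Longrightarrow> length xss = r \<Longrightarrow> \<exists>A\<in>T. (\<Sum>i<r. excess A xss i) \<le> \<beta>"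
  shows "1 \<le> real (card T) * exp (rate * (\<beta> - real r * (\<alpha> - 1 / 2)))"
proof -
  define q where "q = exp (- rate * \<alpha> + rate\<^sup>2 * cost_range\<^sup>2)"
  have "rate * cost_range \<le> 1" "rate\<^sup>2 * cost_range\<^sup>2 = rate / 2"
    using cost_range_ge_1 by (simp_all add: rate_def power2_eq_square field_simps)
  have "1 \<le> real (card T) * exp (rate * \<beta>) * q ^ r"
  proof (rule chernoff_union_bound[OF weights T(1) _ less_imp_le[OF rate_pos]])
    show "0 \<le> q"
      by (simp add: q_def)
    show "\<And>A pre x i. i < length pre \<Longrightarrow> excess A (pre @ [x]) i = excess A pre i"
      by (rule excess_snoc_prefix)
    show "\<And>A pre. A \<in> T \<Longrightarrow> set pre \<subseteq> S \<Longrightarrow>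
        (\<Sum>x\<in>S. w x * exp (- rate * excess A (pre @ [x]) (length pre))) \<le> q"
      unfolding q_def using excess_exp_moment[OF T(2) D0 _ less_imp_le[OF rate_pos]]
        \<open>rate * cost_range \<le> 1\<close> by blast
  qed (assumption | rule good)+
  also have "q ^ r = exp (real r * (- rate * \<alpha> + rate / 2))"
    unfolding q_def \<open>rate\<^sup>2 * cost_range\<^sup>2 = rate / 2\<close> by (simp add: exp_of_nat_mult)
  also have "real (card T) * exp (rate * \<beta>) * \<dots> = real (card T) * exp (rate * (\<beta> - real r * (\<alpha> - 1 / 2)))"
    by (simp add: mult.assoc algebra_simps flip: exp_add)
  finally show ?thesis .
qed

lemma exp_bound_if_some_tape_good:
  assumes D0: "det_alg P D0" and RA: "\<And>t. det_rep_alg P (RA t)" and "\<kappa> + 1 \<le> \<alpha>"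
    and good: "\<And>xss. set xss \<subseteq> S \<Longrightarrow> length xss = r \<Longrightarrow>
        \<exists>t\<in>bounded_tapes m. (\<Sum>i<r. excess (RA t) xss i) \<le> \<kappa> * real r + a"
  shows "1 \<le> exp (real m + rate * (a - real r / 2))"
proof -
  have "card (RA ` bounded_tapes m) \<le> 2 ^ m"
    using card_image_le[OF finite_bounded_tapes, of RA m] card_bounded_tapes_le[of m] by linarith
  then have card: "real (card (RA ` bounded_tapes m)) \<le> exp (real m)"
    using pow2_le_exp[of m] by (metis of_nat_le_iff of_nat_numeral of_nat_power order_trans)
  have "1 \<le> real (card (RA ` bounded_tapes m)) * exp (rate * (\<kappa> * real r + a - real r * (\<alpha> - 1 / 2)))"
  proof (rule card_ge_if_some_excess_bounded[OF D0])
    show "finite (RA ` bounded_tapes m)"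
      using finite_bounded_tapes by blast
    show "\<And>A. A \<in> RA ` bounded_tapes m \<Longrightarrow> det_rep_alg P A"
      using RA by blast
    show "\<exists>A\<in>RA ` bounded_tapes m. (\<Sum>i<r. excess A xss i) \<le> \<kappa> * real r + a"
      if "set xss \<subseteq> S" "length xss = r" for xss
      using good[OF that] by blast
  qed
  also have "\<dots> \<le> exp (real m) * exp (rate * (a - real r / 2))"
  proof (intro mult_mono card)
    have "\<kappa> * real r + real r \<le> \<alpha> * real r"
      using mult_right_mono[OF \<open>\<kappa> + 1 \<le> \<alpha>\<close>, of "real r"] by (simp add: algebra_simps)
    then have "rate * (\<kappa> * real r + a - real r * (\<alpha> - 1 / 2)) \<le> rate * (a - real r / 2)"
      using rate_pos by (intro mult_left_mono) (auto simp: algebra_simps)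
    then show "exp (rate * (\<kappa> * real r + a - real r * (\<alpha> - 1 / 2))) \<le> exp (rate * (a - real r / 2))"
      by simp
  qed auto
  finally show ?thesis
    by (simp add: exp_add)
qed

text \<open>For every sequence of rounds, the combined P-input has length O(r), so a sublinear amount
  of advice suffices to make the repeated-problem algorithm obtained from the advice algorithm good.\<close>

lemma some_short_tape_good:
  assumes fin: "\<And>s xs. (s, xs) \<in> inputs P \<Longrightarrow> finite {ys. valid_out P s xs ys}"
    and g: "\<And>xss. (s, xss) \<in> rep_inputs P \<Longrightarrow> g (s, xss) \<in> inputs P \<and>
        real (length (snd (g (s, xss)))) \<le> real (rep_length xss) + k1 * real (length xss) \<and>
        OPT P (fst (g (s, xss))) (snd (g (s, xss))) - k3 * real (length xss) \<le> rep_OPT P s xss"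
    and RA: "\<And>t xss. (s, xss) \<in> rep_inputs P \<Longrightarrow>
        rep_cost P (RA t) s xss \<le> alg_cost P (A t) (fst (g (s, xss))) (snd (g (s, xss))) + k2 * real (length xss)"
    and A: "\<And>t. det_alg P (A t)" "\<And>s xs. (s, xs) \<in> inputs P \<Longrightarrow>
        \<exists>t. reads_at_most A t s xs (b (length xs)) \<and> alg_cost P (A t) s xs \<le> c * OPT P s xs + a"
    and b: "\<And>n. real (b n) \<le> \<eta> * real n + K" and "0 \<le> \<eta>" "0 \<le> c"
    and xss: "set xss \<subseteq> S" "length xss = r" "1 \<le> r"
  shows "\<exists>t\<in>bounded_tapes (nat \<lfloor>\<eta> * (real (Max (length ` S)) + k1) * real r + K\<rfloor>).
           (\<Sum>i<r. excess (RA t) xss i) \<le> (c * k3 + k2) * real r + a"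
proof -
  have rep: "(s, xss) \<in> rep_inputs P"
    using xss S_inputs by (auto simp: rep_inputs_def)
  obtain s' xs' where g_eq: "g (s, xss) = (s', xs')"
    by fastforce
  have "\<exists>t\<in>bounded_tapes (nat \<lfloor>\<eta> * (real (Max (length ` S)) + k1) * real r + K\<rfloor>).
      rep_cost P (RA t) s xss \<le> c * (\<Sum>i<r. OPT P s (xss ! i)) + (c * k3 + k2) * real r + a"
    unfolding xss(2)[symmetric]
  proof (rule rep_cost_bound_with_short_tape[OF wf rep _ A(1) _ _ b \<open>0 \<le> \<eta>\<close> \<open>0 \<le> c\<close>])
    show "\<And>xs. xs \<in> set xss \<Longrightarrow> finite {ys. valid_out P s xs ys}"
      using fin rep by (auto simp: rep_inputs_def)
    show "\<And>xs. xs \<in> set xss \<Longrightarrow> length xs \<le> Max (length ` S)"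
      using xss(1) finite_S by auto
    show "real (length xs') \<le> real (rep_length xss) + k1 * real (length xss)"
      "OPT P s' xs' - k3 * real (length xss) \<le> rep_OPT P s xss"
      "\<And>t. rep_cost P (RA t) s xss \<le> alg_cost P (A t) s' xs' + k2 * real (length xss)"
      "\<exists>t. reads_at_most A t s' xs' (b (length xs')) \<and> alg_cost P (A t) s' xs' \<le> c * OPT P s' xs' + a"
      using g[OF rep] RA[OF rep] A(2) g_eq by simp_all
  qed
  then obtain t where "t \<in> bounded_tapes (nat \<lfloor>\<eta> * (real (Max (length ` S)) + k1) * real r + K\<rfloor>)"
    "rep_cost P (RA t) s xss \<le> c * (\<Sum>i<r. OPT P s (xss ! i)) + (c * k3 + k2) * real r + a"
    by blast
  moreover have "(\<Sum>i<r. excess (RA t) xss i) = rep_cost P (RA t) s xss - c * (\<Sum>i<r. OPT P s (xss ! i))"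
    using xss(2) by (simp add: excess_def rep_cost_def sum_subtractf sum_distrib_left)
  ultimately show ?thesis
    by force
qed

lemma sublinear_advice_impossible:
  assumes fin: "\<And>s xs. (s, xs) \<in> inputs P \<Longrightarrow> finite {ys. valid_out P s xs ys}"
    and "0 \<le> k1" and "1 \<le> c" and "c * k3 + k2 + 1 \<le> \<alpha>"
    and g: "\<And>xss. (s, xss) \<in> rep_inputs P \<Longrightarrow> g (s, xss) \<in> inputs P \<and>
        real (length (snd (g (s, xss)))) \<le> real (rep_length xss) + k1 * real (length xss) \<and>
        OPT P (fst (g (s, xss))) (snd (g (s, xss))) - k3 * real (length xss) \<le> rep_OPT P s xss"
    and RA: "\<And>t. det_rep_alg P (RA t)" "\<And>t xss. (s, xss) \<in> rep_inputs P \<Longrightarrow>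
        rep_cost P (RA t) s xss \<le> alg_cost P (A t) (fst (g (s, xss))) (snd (g (s, xss))) + k2 * real (length xss)"
    and A: "\<And>t. det_alg P (A t)" "\<And>s xs. (s, xs) \<in> inputs P \<Longrightarrow>
        \<exists>t. reads_at_most A t s xs (b (length xs)) \<and> alg_cost P (A t) s xs \<le> c * OPT P s xs + a"
    and b: "(\<lambda>n. real (b n)) \<in> o(\<lambda>n. real n)"
  shows False
proof -
  define L where "L = real (Max (length ` S))"
  define \<eta> where "\<eta> = rate / (4 * (L + k1 + 1))"
  have "0 < \<eta>" "\<eta> * (L + k1) \<le> rate / 4"
    using rate_pos \<open>0 \<le> k1\<close> by (simp_all add: \<eta>_def L_def field_simps)
  obtain K where K: "0 \<le> K" "\<And>n. real (b n) \<le> \<eta> * real n + K"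
    using smallo_imp_linear_bound[OF b \<open>0 < \<eta>\<close>] by blast
  \<comment> \<open>A bound on the advice read on the P-input that encodes r rounds.\<close>
  define M where "M r = nat \<lfloor>\<eta> * (L + k1) * real r + K\<rfloor>" for r
  have "0 \<le> c"
    using \<open>1 \<le> c\<close> by simp
  have "1 \<le> exp (real (M r) + rate * (a - real r / 2))" if "1 \<le> r" for r
  proof (rule exp_bound_if_some_tape_good[OF A(1) RA(1) \<open>c * k3 + k2 + 1 \<le> \<alpha>\<close>])
    fix xss assume "set xss \<subseteq> S" "length xss = r"
    from some_short_tape_good[OF fin g RA(2) A K(2) less_imp_le[OF \<open>0 < \<eta>\<close>] \<open>0 \<le> c\<close> this that]
    show "\<exists>t\<in>bounded_tapes (M r). (\<Sum>i<r. excess (RA t) xss i) \<le> (c * k3 + k2) * real r + a"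
      by (simp add: M_def L_def)
  qed
  moreover have "real (M r) \<le> rate / 4 * real r + K" for r
  proof -
    have "real (M r) \<le> \<eta> * (L + k1) * real r + K"
      using \<open>0 < \<eta>\<close> \<open>0 \<le> k1\<close> K(1) unfolding M_def L_def by (simp add: of_nat_nat)
    also have "\<dots> \<le> rate / 4 * real r + K"
      using \<open>\<eta> * (L + k1) \<le> rate / 4\<close> by (intro add_right_mono mult_right_mono) auto
    finally show ?thesis .
  qed
  ultimately have "1 \<le> exp (K + rate * a - rate / 4 * real r)" if "1 \<le> r" for r
    using that by (fastforce elim: order_trans simp: algebra_simps)
  moreover obtain r :: nat where "1 \<le> r" "exp (K + rate * a - rate / 4 * real r) < 1"
    using ex_exp_diff_less_1[of "rate / 4" "K + rate * a"] rate_pos by auto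
  ultimately show False
    by fastforce
qed

end

section \<open>From advice to randomized algorithms\<close>

lemma no_sublinear_advice_against_hard_inputs:
  fixes P :: "('s, 'x, 'y) online_problem"
  assumes wf: "wf_problem P" and sr: "sigma_repeatable P" and "1 \<le> c"
    and A: "det_adv_competitive P A b c" and b: "(\<lambda>n. real (b n)) \<in> o(\<lambda>n. real n)"
    and hard: "\<And>\<alpha>. 0 < \<alpha> \<Longrightarrow> \<exists>p. finite (set_pmf p) \<and> set_pmf p \<subseteq> inputs P \<and>
        (\<forall>D. det_alg P D \<longrightarrow> c * measure_pmf.expectation p (\<lambda>(s, xs). OPT P s xs) + \<alpha>
              \<le> measure_pmf.expectation p (\<lambda>(s, xs). alg_cost P D s xs))"
  shows False
proof -
  have fin: "\<And>s xs. (s, xs) \<in> inputs P \<Longrightarrow> finite {ys. valid_out P s xs ys}"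
    using sr unfolding sigma_repeatable_def by blast
  obtain k1 g k3 rep k2 where "0 \<le> k1"
    and g: "\<And>s xss. (s, xss) \<in> rep_inputs P \<Longrightarrow> g (s, xss) \<in> inputs P"
      "\<And>s xss. (s, xss) \<in> rep_inputs P \<Longrightarrow>
        real (length (snd (g (s, xss)))) \<le> real (rep_length xss) + k1 * real (length xss)"
      "\<And>s xss. (s, xss) \<in> rep_inputs P \<Longrightarrow>
        OPT P (fst (g (s, xss))) (snd (g (s, xss))) - k3 * real (length xss) \<le> rep_OPT P s xss"
    and rep: "\<And>D. det_alg P D \<Longrightarrow> det_rep_alg P (rep D)"
      "\<And>D s xss. det_alg P D \<Longrightarrow> (s, xss) \<in> rep_inputs P \<Longrightarrow>
        rep_cost P (rep D) s xss \<le> alg_cost P D (fst (g (s, xss))) (snd (g (s, xss))) + k2 * real (length xss)"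
    by (fact sigma_repeatableE[OF sr])
  obtain a where A_det: "\<And>t. det_alg P (A t)" and adv: "\<And>s xs. (s, xs) \<in> inputs P \<Longrightarrow>
      \<exists>t. reads_at_most A t s xs (b (length xs)) \<and> alg_cost P (A t) s xs \<le> c * OPT P s xs + a"
    using A unfolding det_adv_competitive_def det_adv_alg_def by blast
  \<comment> \<open>The hard distribution must beat the per-round overhead c * k3 + k2 of the repetition.\<close>
  define \<alpha> where "\<alpha> = \<bar>c * k3 + k2\<bar> + 1"
  have "0 < \<alpha>" "c * k3 + k2 + 1 \<le> \<alpha>"
    by (simp_all add: \<alpha>_def add_nonneg_pos)
  then obtain p where p: "finite (set_pmf p)" "set_pmf p \<subseteq> inputs P"
    "\<And>D. det_alg P D \<Longrightarrow> c * measure_pmf.expectation p (\<lambda>(s, xs). OPT P s xs) + \<alpha>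
        \<le> measure_pmf.expectation p (\<lambda>(s, xs). alg_cost P D s xs)"
    using hard by blast
  obtain s S w where "hard_on_state P c \<alpha> s S w"
    using hard_distribution_on_one_state[OF wf A_det \<open>1 \<le> c\<close> \<open>0 < \<alpha>\<close> p] by blast
  then interpret hard_rounds P c \<alpha> s S w
    using wf fin by unfold_locales (auto simp: hard_on_state_def)
  show False
  proof (rule sublinear_advice_impossible[OF fin \<open>0 \<le> k1\<close> \<open>1 \<le> c\<close> \<open>c * k3 + k2 + 1 \<le> \<alpha>\<close> _ _ _ A_det adv b])
    show "\<And>t. det_rep_alg P (rep (A t))"
      using rep(1)[OF A_det] .
  qed (use g rep(2)[OF A_det] in auto)
qed

lemma rand_if_advice_competitive_ge_1:
  assumes wf: "wf_problem P" and cp: "compact_problem P" and sr: "sigma_repeatable P" and "1 \<le> c"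
    and adv: "\<forall>\<epsilon>>0. \<exists>A b. (\<lambda>n. real (b n)) \<in> o(\<lambda>n. real n) \<and> det_adv_competitive P A b (c + \<epsilon>)"
  shows "\<forall>\<epsilon>>0. \<exists>R. rand_alg P R \<and> rand_competitive P R (c + \<epsilon>)"
proof (rule ccontr)
  assume "\<not> ?thesis"
  then obtain \<epsilon> where "0 < \<epsilon>" and no_rand: "\<And>R. rand_alg P R \<Longrightarrow> \<not> rand_competitive P R (c + \<epsilon>)"
    by blast
  obtain A b where b: "(\<lambda>n. real (b n)) \<in> o(\<lambda>n. real n)" and A: "det_adv_competitive P A b (c + \<epsilon> / 2)"
    using adv \<open>0 < \<epsilon>\<close> half_gt_zero by blast
  have no_rand': "\<not> rand_competitive P R c'" if "rand_alg P R \<and> c' < c + \<epsilon>" for R c'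
  proof
    assume "rand_competitive P R c'"
    moreover have "c' * OPT P s xs \<le> (c + \<epsilon>) * OPT P s xs + 0" if "(s, xs) \<in> inputs P" for s xs
      using mult_right_mono[of c' "c + \<epsilon>" "OPT P s xs"] OPT_nonneg_if_det_adv_competitive[OF wf A that]
        \<open>rand_alg P R \<and> c' < c + \<epsilon>\<close> by simp
    ultimately have "rand_competitive P R (c + \<epsilon>)"
      by (rule rand_competitive_weaken)
    with no_rand that show False
      by blast
  qed
  have half: "c + \<epsilon> - \<epsilon> / 2 = c + \<epsilon> / 2"
    by simp
  show False
  proof (rule no_sublinear_advice_against_hard_inputs[OF wf sr _ A b])
    fix \<alpha> :: real assume "0 < \<alpha>"
    have "\<exists>p. finite (set_pmf p) \<and> set_pmf p \<subseteq> inputs P \<and>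
        (\<forall>D. det_alg P D \<longrightarrow> measure_pmf.expectation p (\<lambda>(s, xs). alg_cost P D s xs)
           \<ge> (c + \<epsilon> - \<epsilon> / 2) * measure_pmf.expectation p (\<lambda>(s, xs). OPT P s xs) + \<alpha>)"
      by (rule cp[unfolded compact_problem_def, rule_format, OF _ no_rand'])
        (use \<open>1 \<le> c\<close> \<open>0 < \<epsilon>\<close> \<open>0 < \<alpha>\<close> in simp_all)
    then show "\<exists>p. finite (set_pmf p) \<and> set_pmf p \<subseteq> inputs P \<and>
        (\<forall>D. det_alg P D \<longrightarrow> (c + \<epsilon> / 2) * measure_pmf.expectation p (\<lambda>(s, xs). OPT P s xs) + \<alpha>
              \<le> measure_pmf.expectation p (\<lambda>(s, xs). alg_cost P D s xs))"
      by (simp only: half)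
  qed (use \<open>1 \<le> c\<close> \<open>0 < \<epsilon>\<close> in simp)
qed

lemma rand_if_advice_competitive:
  assumes wf: "wf_problem P" and cp: "compact_problem P" and sr: "sigma_repeatable P"
    and adv: "\<forall>\<epsilon>>0. \<exists>A b. (\<lambda>n. real (b n)) \<in> o(\<lambda>n. real n) \<and> det_adv_competitive P A b (c + \<epsilon>)"
  shows "\<forall>\<epsilon>>0. \<exists>R. rand_alg P R \<and> rand_competitive P R (c + \<epsilon>)"
proof (cases "1 \<le> c")
  case True
  then show ?thesis
    by (rule rand_if_advice_competitive_ge_1[OF wf cp sr _ adv])
next
  case False
  then have "0 < (1 - c) / 2"
    by simp
  then obtain A b where A: "det_adv_competitive P A b (c + (1 - c) / 2)"
    using adv by blast
  moreover have "c + (1 - c) / 2 < 1"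
    using False by (simp add: field_simps)
  ultimately obtain B where B: "\<And>s xs. (s, xs) \<in> inputs P \<Longrightarrow> OPT P s xs \<le> B"
    using OPT_bounded_if_det_adv_competitive_lt_1[OF wf] by blast
  have OPT_nonneg: "\<And>s xs. (s, xs) \<in> inputs P \<Longrightarrow> 0 \<le> OPT P s xs"
    using OPT_nonneg_if_det_adv_competitive[OF wf A] .
  have "\<forall>\<epsilon>>0. \<exists>A b. (\<lambda>n. real (b n)) \<in> o(\<lambda>n. real n) \<and> det_adv_competitive P A b (1 + \<epsilon>)"
  proof (intro allI impI)
    fix \<epsilon> :: real assume "0 < \<epsilon>"
    then obtain A b where "(\<lambda>n. real (b n)) \<in> o(\<lambda>n. real n)" "det_adv_competitive P A b (c + \<epsilon>)"
      using adv by blast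
    moreover have "(c + \<epsilon>) * OPT P s xs \<le> (1 + \<epsilon>) * OPT P s xs + 0" if "(s, xs) \<in> inputs P" for s xs
      using mult_right_mono[of "c + \<epsilon>" "1 + \<epsilon>" "OPT P s xs"] False OPT_nonneg[OF that] by simp
    ultimately show "\<exists>A b. (\<lambda>n. real (b n)) \<in> o(\<lambda>n. real n) \<and> det_adv_competitive P A b (1 + \<epsilon>)"
      using det_adv_competitive_weaken by blast
  qed
  then have rand_1: "\<forall>\<epsilon>>0. \<exists>R. rand_alg P R \<and> rand_competitive P R (1 + \<epsilon>)"
    by (rule rand_if_advice_competitive_ge_1[OF wf cp sr order_refl])
  show ?thesis
  proof (intro allI impI)
    fix \<epsilon> :: real assume "0 < \<epsilon>"
    then obtain R where R: "rand_alg P R" "rand_competitive P R (1 + \<epsilon>)"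
      using rand_1 by blast
    have "(1 + \<epsilon>) * OPT P s xs \<le> (c + \<epsilon>) * OPT P s xs + (1 - c) * B" if "(s, xs) \<in> inputs P" for s xs
      using mult_left_mono[OF B[OF that], of "1 - c"] False by (simp add: algebra_simps)
    with R show "\<exists>R. rand_alg P R \<and> rand_competitive P R (c + \<epsilon>)"
      using rand_competitive_weaken by blast
  qed
qed

theorem theorem2:
  fixes P :: "('s, 'x, 'y) online_problem" and c :: real
  assumes "wf_problem P"
    and "compact_problem P"
    and "sigma_repeatable P"
    and "few_inputs P"
  shows "(\<forall>\<epsilon>>0. \<exists>R. rand_alg P R \<and> rand_competitive P R (c + \<epsilon>))
     \<longleftrightarrow> (\<forall>\<epsilon>>0. \<exists>A b. (\<lambda>n. real (b n)) \<in> o(\<lambda>n. real n) \<and> det_adv_competitive P A b (c + \<epsilon>))"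
  using advice_if_rand_competitive[OF assms(1,4)] rand_if_advice_competitive[OF assms(1-3)] by blast

end
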